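(* Let $\mathcal{H}_\mathrm{V}$ and $\mathcal{H}_\mathrm{L}$ be finite-dimensional Hilbert spaces, let $\eta_\mathrm{V}\in\mathcal{P}(\mathcal{H}_\mathrm{V})$ be a target density operator, and let $\{\rho(\theta)\}_\theta\subset\mathcal{P}(\mathcal{H}_\mathrm{V}\otimes\mathcal{H}_\mathrm{L})$ be a density operator latent variable model with $\rho(\theta)$ positive definite for every $\theta$, and $\rho_\mathrm{V}(\theta)=\mathrm{Tr}_\mathrm{L}\rho(\theta)$. Let $\mathcal{J}(\eta_\mathrm{V})=\{\eta\in\mathcal{P}(\mathcal{H}_\mathrm{V}\otimes\mathcal{H}_\mathrm{L}) : \mathrm{Tr}_\mathrm{L}\eta=\eta_\mathrm{V}\}$. Then for every $\theta$ and every $\eta\in\mathcal{J}(\eta_\mathrm{V})$, $$\mathcal{L}(\theta)=\mathrm{Tr}(\eta_\mathrm{V}\log\rho_\mathrm{V}(\theta))\;\geq\; \mathrm{QELBO}(\eta,\theta):=\mathrm{Tr}(\eta\log\rho(\theta))+S(\eta)-S(\eta_\mathrm{V}).$$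
   Context: $\mathcal{P}(\mathcal{H})$ denotes the set of density operators on $\mathcal{H}$ (Hermitian, positive semidefinite, unit trace). $\mathrm{Tr}_\mathrm{L}$ is the partial trace over $\mathcal{H}_\mathrm{L}$. $S(\eta)=-\mathrm{Tr}(\eta\log\eta)$ is the von Neumann entropy (with $0\log 0=0$). $\mathcal{L}(\theta)$ is called the log-likelihood of the model for the target $\eta_\mathrm{V}$. *)

theory Defs
  imports Complex_Main "Jordan_Normal_Form.Matrix" "Jordan_Normal_Form.Schur_Decomposition"
begin

text \<open>Finite-dimensional Hilbert spaces are modelled as complex coordinate spaces;
operators are complex square matrices (JNF type complex mat, square).\<close>

definition hermitian_mat :: "nat \<Rightarrow> complex mat \<Rightarrow> bool" where
  "hermitian_mat n A \<longleftrightarrow> A \<in> carrier_mat n n \<and> mat_adjoint A = A"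

definition psd_mat :: "nat \<Rightarrow> complex mat \<Rightarrow> bool" where
  "psd_mat n A \<longleftrightarrow> hermitian_mat n A \<and>
     (\<forall>v \<in> carrier_vec n. 0 \<le> Re (conjugate v \<bullet> (A *\<^sub>v v)))"

definition pd_mat :: "nat \<Rightarrow> complex mat \<Rightarrow> bool" where
  "pd_mat n A \<longleftrightarrow> hermitian_mat n A \<and>
     (\<forall>v \<in> carrier_vec n. v \<noteq> 0\<^sub>v n \<longrightarrow> 0 < Re (conjugate v \<bullet> (A *\<^sub>v v)))"

definition mat_trace :: "complex mat \<Rightarrow> complex" where
  "mat_trace A = (\<Sum>i<dim_row A. A $$ (i, i))"

definition density_mat :: "nat \<Rightarrow> complex mat \<Rightarrow> bool" where
  "density_mat n A \<longleftrightarrow> psd_mat n A \<and> mat_trace A = 1"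

definition unitary_mat :: "nat \<Rightarrow> complex mat \<Rightarrow> bool" where
  "unitary_mat n U \<longleftrightarrow> U \<in> carrier_mat n n \<and> U * mat_adjoint U = 1\<^sub>m n"

definition real_diag_mat :: "nat \<Rightarrow> (nat \<Rightarrow> real) \<Rightarrow> complex mat" where
  "real_diag_mat n d = mat n n (\<lambda>(i,j). if i = j then complex_of_real (d i) else 0)"

definition mat_fun :: "(real \<Rightarrow> real) \<Rightarrow> complex mat \<Rightarrow> complex mat" where
  "mat_fun f A = (SOME B. \<exists>U d. unitary_mat (dim_row A) U \<and>
        A = U * real_diag_mat (dim_row A) d * mat_adjoint U \<and>
        B = U * real_diag_mat (dim_row A) (f \<circ> d) * mat_adjoint U)"

definition mat_log :: "complex mat \<Rightarrow> complex mat" where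
  "mat_log A = mat_fun ln A"

text \<open>Von Neumann entropy S(eta) = - Tr(eta log eta). On the kernel of eta the
  factor eta annihilates log eta, so the convention 0 log 0 = 0 is automatic.\<close>
definition vn_entropy :: "complex mat \<Rightarrow> real" where
  "vn_entropy A = - Re (mat_trace (A * mat_log A))"

text \<open>Partial trace over H_L for H_V (dim dV) tensor H_L (dim dL); basis index
  (i,j) of the product corresponds to i * dL + j.\<close>
definition ptrace_L :: "nat \<Rightarrow> nat \<Rightarrow> complex mat \<Rightarrow> complex mat" where
  "ptrace_L dV dL A = mat dV dV (\<lambda>(i,i'). \<Sum>j<dL. A $$ (i * dL + j, i' * dL + j))"

definition joint_set :: "nat \<Rightarrow> nat \<Rightarrow> complex mat \<Rightarrow> complex mat set" where
  "joint_set dV dL etaV = {eta. density_mat (dV * dL) eta \<and> ptrace_L dV dL eta = etaV}"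

definition log_likelihood :: "nat \<Rightarrow> nat \<Rightarrow> complex mat \<Rightarrow> complex mat \<Rightarrow> real" where
  "log_likelihood dV dL etaV rho = Re (mat_trace (etaV * mat_log (ptrace_L dV dL rho)))"

definition QELBO :: "complex mat \<Rightarrow> complex mat \<Rightarrow> complex mat \<Rightarrow> real" where
  "QELBO etaV eta rho =
     Re (mat_trace (eta * mat_log rho)) + vn_entropy eta - vn_entropy etaV"

end

theory Submission
  imports Defs "HOL-Computational_Algebra.Fundamental_Theorem_Algebra"
begin

text \<open>Writing D(A, B) = tr (A log A) - tr (A log B), the claim is D(\<eta>_V, \<rho>_V) \<le> D(\<eta>, \<rho>):
  relative entropy does not increase under the partial trace.  Diagonalise A = U diag(a) U*,
  B = W diag(b) W* and let c(i,j) = |(W* U)(j,i)|^2.  Then D(A, B) = \<Psi>(1) - \<Psi>(0) for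
  \<Psi>(u) = - \<Sum> c(i,j) a(i) ln ((1 - u) a(i) + u b(j)), whose derivative is
  tr A / (1 - u) - tr B / (1 - u)^2 + u / (1 - u)^2 G(u; A, B) with
  G(u; A, B) = \<Sum> c(i,j) b(j)^2 / ((1 - u) a(i) + u b(j)).  Now G(u; A, B) is the maximum over Z
  of 2 Re tr (B Z) - (1 - u) tr (Z* A Z) - u tr (Z* Z B), which is linear in (A, B) and turns
  into the same expression for the partial traces when Z is replaced by Z \<otimes> 1.  So G can
  only decrease under the partial trace while the traces are preserved; hence the difference
  of the two functions \<Psi> is increasing on [0, 1], which is the claim.\<close>

lemma mat_adjoint_carrier [simp]: "A \<in> carrier_mat n m \<Longrightarrow> mat_adjoint A \<in> carrier_mat m n"
  unfolding mat_adjoint_def by (auto simp: mat_of_rows_def)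

lemma dim_mat_adjoint [simp]:
  "dim_row (mat_adjoint A) = dim_col A" "dim_col (mat_adjoint A) = dim_row A"
  unfolding mat_adjoint_def by (auto simp: mat_of_rows_def)

lemma index_mat_adjoint [simp]:
  "i < dim_col A \<Longrightarrow> j < dim_row A \<Longrightarrow> mat_adjoint A $$ (i,j) = cnj (A $$ (j,i))"
  unfolding mat_adjoint_def by (auto simp: mat_of_rows_def)

lemma mat_adjoint_adjoint [simp]: "mat_adjoint (mat_adjoint (A::complex mat)) = A"
  by (intro eq_matI) auto

lemma mat_adjoint_mult:
  assumes "(A::complex mat) \<in> carrier_mat n m" "B \<in> carrier_mat m k"
  shows "mat_adjoint (A * B) = mat_adjoint B * mat_adjoint A"
  using assms by (intro eq_matI) (auto simp: scalar_prod_def mult.commute)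

text \<open>The library rule mult_carrier_mat leaves the inner dimension free, which the simplifier
  cannot instantiate.\<close>

lemma mult_carrier_mat_square [simp]:
  "A \<in> carrier_mat n n \<Longrightarrow> B \<in> carrier_mat n n \<Longrightarrow> A * B \<in> carrier_mat n n"
  by (rule mult_carrier_mat)

lemma index_mult_mat_sum:
  assumes "(X::'a::comm_semiring_0 mat) \<in> carrier_mat a b" "Y \<in> carrier_mat b c" "i < a" "j < c"
  shows "(X * Y) $$ (i,j) = (\<Sum>k<b. X $$ (i,k) * Y $$ (k,j))"
  using assms by (auto simp: scalar_prod_def atLeast0LessThan intro!: sum.cong)

lemma index_mult_mat_adjoint:
  assumes "(M::complex mat) \<in> carrier_mat n k" "M' \<in> carrier_mat m k" "i < n" "j < m"
  shows "(M * mat_adjoint M') $$ (i,j) = (\<Sum>l<k. M $$ (i,l) * cnj (M' $$ (j,l)))"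
  using assms by (auto simp: scalar_prod_def atLeast0LessThan intro!: sum.cong)

lemma mat_trace_mult_comm:
  assumes "A \<in> carrier_mat n m" "B \<in> carrier_mat m n"
  shows "mat_trace (A * B) = mat_trace (B * A)"
proof -
  have "mat_trace (A * B) = (\<Sum>i<n. \<Sum>k<m. A $$ (i,k) * B $$ (k,i))"
    using assms by (simp add: mat_trace_def index_mult_mat_sum del: index_mult_mat(1))
  also have "\<dots> = (\<Sum>k<m. \<Sum>i<n. B $$ (k,i) * A $$ (i,k))"
    by (subst sum.swap) (simp add: mult.commute)
  also have "\<dots> = mat_trace (B * A)"
    using assms by (simp add: mat_trace_def index_mult_mat_sum del: index_mult_mat(1))
  finally show ?thesis .
qed

lemma unitary_matD:
  "unitary_mat n U \<Longrightarrow> U \<in> carrier_mat n n"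
  "unitary_mat n U \<Longrightarrow> U * mat_adjoint U = 1\<^sub>m n"
  by (simp_all add: unitary_mat_def)

lemma unitary_mat_adjoint_mult: "unitary_mat n U \<Longrightarrow> mat_adjoint U * U = 1\<^sub>m n"
  unfolding unitary_mat_def by (rule mat_mult_left_right_inverse[of U n]) auto

lemma unitary_mat_cancel:
  assumes "unitary_mat n U" "(X::complex mat) \<in> carrier_mat n k"
  shows "mat_adjoint U * (U * X) = X" "U * (mat_adjoint U * X) = X"
proof -
  have U: "U \<in> carrier_mat n n" using assms(1) by (rule unitary_matD)
  have "mat_adjoint U * (U * X) = (mat_adjoint U * U) * X"
    using U assms by (simp add: assoc_mult_mat[of _ n n _ n _ k])
  then show "mat_adjoint U * (U * X) = X" using unitary_mat_adjoint_mult[OF assms(1)] assms by simp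
  have "U * (mat_adjoint U * X) = (U * mat_adjoint U) * X"
    using U assms by (simp add: assoc_mult_mat[of _ n n _ n _ k])
  then show "U * (mat_adjoint U * X) = X" using unitary_matD(2)[OF assms(1)] assms by simp
qed

lemma unitary_mat_mult:
  assumes "unitary_mat n U" "unitary_mat n V"
  shows "unitary_mat n (U * V)"
proof -
  have U: "U \<in> carrier_mat n n" and V: "V \<in> carrier_mat n n" using assms by (auto dest: unitary_matD)
  have "U * V * mat_adjoint (U * V) = U * (V * (mat_adjoint V * mat_adjoint U))"
    using U V by (simp add: mat_adjoint_mult[of _ n n _ n])
      (meson assoc_mult_mat mat_adjoint_carrier mult_carrier_mat)
  also have "\<dots> = 1\<^sub>m n"
    using U unitary_mat_cancel(2)[OF assms(2), of "mat_adjoint U" n] unitary_matD(2)[OF assms(1)] by simp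
  finally show ?thesis using U V by (simp add: unitary_mat_def)
qed

lemma mat_trace_unitary_conj:
  assumes W: "unitary_mat n W" and R: "(R::complex mat) \<in> carrier_mat n n"
  shows "mat_trace (W * (R * mat_adjoint W)) = mat_trace R"
proof -
  have Wc: "W \<in> carrier_mat n n" using W by (rule unitary_matD)
  have "mat_trace (W * (R * mat_adjoint W)) = mat_trace ((R * mat_adjoint W) * W)"
    by (rule mat_trace_mult_comm[of _ n n]) (use Wc R in auto)
  also have "(R * mat_adjoint W) * W = R * (mat_adjoint W * W)"
    using Wc R by (simp add: assoc_mult_mat[of _ n n _ n _ n])
  finally show ?thesis using unitary_mat_adjoint_mult[OF W] R by simp
qed

lemma real_diag_mat_carrier [simp]: "real_diag_mat n d \<in> carrier_mat n n"
  by (simp add: real_diag_mat_def)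

lemma dim_real_diag_mat [simp]: "dim_row (real_diag_mat n d) = n" "dim_col (real_diag_mat n d) = n"
  by (auto simp add: real_diag_mat_def)

lemma index_real_diag_mat [simp]:
  "i < n \<Longrightarrow> j < n \<Longrightarrow> real_diag_mat n d $$ (i,j) = (if i = j then complex_of_real (d i) else 0)"
  by (simp add: real_diag_mat_def)

lemma mat_adjoint_real_diag_mat [simp]: "mat_adjoint (real_diag_mat n d) = real_diag_mat n d"
  by (intro eq_matI) auto

lemma real_diag_mat_one: "real_diag_mat n (\<lambda>_. 1) = 1\<^sub>m n"
  by (intro eq_matI) auto

lemma index_real_diag_mult:
  assumes "(X::complex mat) \<in> carrier_mat n m" "i < n" "j < m"
  shows "(real_diag_mat n x * X) $$ (i,j) = complex_of_real (x i) * X $$ (i,j)"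
proof -
  have "(real_diag_mat n x * X) $$ (i,j) = (\<Sum>k<n. (if i = k then complex_of_real (x i) else 0) * X $$ (k,j))"
    using assms by (simp add: index_mult_mat_sum[of _ n n _ m] del: index_mult_mat(1))
  also have "\<dots> = (\<Sum>k<n. if k = i then complex_of_real (x i) * X $$ (k,j) else 0)"
    by (rule sum.cong) auto
  finally show ?thesis using assms by simp
qed

lemma index_mult_real_diag:
  assumes "(X::complex mat) \<in> carrier_mat m n" "i < m" "j < n"
  shows "(X * real_diag_mat n x) $$ (i,j) = X $$ (i,j) * complex_of_real (x j)"
proof -
  have "(X * real_diag_mat n x) $$ (i,j) = (\<Sum>k<n. X $$ (i,k) * (if k = j then complex_of_real (x k) else 0))"
    using assms by (simp add: index_mult_mat_sum[of _ m n _ n] del: index_mult_mat(1))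
  also have "\<dots> = (\<Sum>k<n. if k = j then X $$ (i,k) * complex_of_real (x k) else 0)"
    by (rule sum.cong) auto
  finally show ?thesis using assms by simp
qed

lemma index_conj_real_diag:
  assumes "(M::complex mat) \<in> carrier_mat n k" "M' \<in> carrier_mat m k" "i < n" "j < m"
  shows "(M * real_diag_mat k d * mat_adjoint M') $$ (i,j) = (\<Sum>l<k. M $$ (i,l) * d l * cnj (M' $$ (j,l)))"
proof -
  have "(M * real_diag_mat k d * mat_adjoint M') $$ (i,j)
      = (\<Sum>l<k. (M * real_diag_mat k d) $$ (i,l) * mat_adjoint M' $$ (l,j))"
    using assms by (simp add: index_mult_mat_sum[of _ n k _ m] del: index_mult_mat(1))
  also have "\<dots> = (\<Sum>l<k. M $$ (i,l) * d l * cnj (M' $$ (j,l)))"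
    using assms by (intro sum.cong refl) (simp add: index_mult_real_diag[of _ n k] del: index_mult_mat(1))
  finally show ?thesis .
qed

lemma index_adjoint_real_diag_mult:
  assumes "(M::complex mat) \<in> carrier_mat k n" "M' \<in> carrier_mat k m" "i < n" "j < m"
  shows "(mat_adjoint M * real_diag_mat k d * M') $$ (i,j) = (\<Sum>l<k. cnj (M $$ (l,i)) * d l * M' $$ (l,j))"
  using index_conj_real_diag[of "mat_adjoint M" n k "mat_adjoint M'" m] assms by simp

lemma mat_trace_real_diag_mult:
  assumes "(X::complex mat) \<in> carrier_mat n n"
  shows "mat_trace (real_diag_mat n x * X) = (\<Sum>i<n. complex_of_real (x i) * X $$ (i,i))"
  using assms by (simp add: mat_trace_def index_real_diag_mult[of _ n n] del: index_mult_mat(1))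

lemma mat_trace_mult_real_diag:
  assumes "(X::complex mat) \<in> carrier_mat n n"
  shows "mat_trace (X * real_diag_mat n x) = (\<Sum>i<n. X $$ (i,i) * complex_of_real (x i))"
  using assms by (simp add: mat_trace_def index_mult_real_diag[of _ n n] del: index_mult_mat(1))

lemma mat_trace_spectral:
  assumes "unitary_mat n U"
  shows "mat_trace (U * real_diag_mat n x * mat_adjoint U) = (\<Sum>i<n. complex_of_real (x i))"
proof -
  have "U * real_diag_mat n x * mat_adjoint U = U * (real_diag_mat n x * mat_adjoint U)"
    using unitary_matD(1)[OF assms] by (simp add: assoc_mult_mat[of _ n n _ n _ n])
  then show ?thesis using mat_trace_unitary_conj[OF assms, of "real_diag_mat n x"]
    by (simp add: mat_trace_def)
qed

section \<open>The spectral theorem for Hermitian matrices\<close>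

lemma cscalar_prod_sum:
  "(x::complex vec) \<in> carrier_vec n \<Longrightarrow> y \<in> carrier_vec n \<Longrightarrow> x \<bullet>c y = (\<Sum>i<n. x$i * cnj (y$i))"
  by (auto simp: scalar_prod_def atLeast0LessThan intro!: sum.cong)

lemma cscalar_prod_smult:
  "(x::complex vec) \<in> carrier_vec n \<Longrightarrow> y \<in> carrier_vec n \<Longrightarrow> (a \<cdot>\<^sub>v x) \<bullet>c (b \<cdot>\<^sub>v y) = a * cnj b * (x \<bullet>c y)"
  by (simp add: cscalar_prod_sum sum_distrib_left mult_ac)

lemma cscalar_prod_self:
  assumes "(x::complex vec) \<in> carrier_vec n"
  shows "x \<bullet>c x = complex_of_real (\<Sum>i<n. (cmod (x$i))\<^sup>2)"
  using assms by (simp add: cscalar_prod_sum complex_norm_square del: of_real_power)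

lemma cscalar_prod_self_pos:
  assumes x: "(x::complex vec) \<in> carrier_vec n" "x \<noteq> 0\<^sub>v n"
  shows "0 < (\<Sum>i<n. (cmod (x$i))\<^sup>2)"
proof -
  obtain i where i: "i < n" "x $ i \<noteq> 0" using x by (metis eq_vecI carrier_vecD index_zero_vec(1,2))
  have "0 < (cmod (x$i))\<^sup>2" using i by simp
  also have "\<dots> \<le> (\<Sum>i<n. (cmod (x$i))\<^sup>2)" by (rule member_le_sum) (use i in auto)
  finally show ?thesis .
qed

definition vec_normalize :: "complex vec \<Rightarrow> complex vec" where
  "vec_normalize w = (1 / complex_of_real (sqrt (Re (w \<bullet>c w)))) \<cdot>\<^sub>v w"

lemma vec_normalize_carrier [simp]: "w \<in> carrier_vec n \<Longrightarrow> vec_normalize w \<in> carrier_vec n"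
  by (simp add: vec_normalize_def)

lemma vec_normalize_unit:
  assumes "w \<in> carrier_vec n" "w \<noteq> 0\<^sub>v n"
  shows "vec_normalize w \<bullet>c vec_normalize w = 1"
proof -
  define S where "S = (\<Sum>i<n. (cmod (w$i))\<^sup>2)"
  have S: "0 < S" "w \<bullet>c w = complex_of_real S"
    using cscalar_prod_self_pos[OF assms] cscalar_prod_self[OF assms(1)] by (auto simp: S_def)
  have "vec_normalize w \<bullet>c vec_normalize w
      = complex_of_real S / (complex_of_real (sqrt S) * complex_of_real (sqrt S))"
    unfolding vec_normalize_def by (subst cscalar_prod_smult[of _ n]) (use assms S in auto)
  also have "complex_of_real (sqrt S) * complex_of_real (sqrt S) = complex_of_real S"
    using S(1) by (metis abs_of_pos of_real_mult real_sqrt_mult_self)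
  finally show ?thesis using S(1) by simp
qed

lemma vec_normalize_id: "w \<bullet>c w = 1 \<Longrightarrow> vec_normalize w = w"
  by (simp add: vec_normalize_def)

lemma vec_normalize_orthogonal:
  "v \<in> carrier_vec n \<Longrightarrow> w \<in> carrier_vec n \<Longrightarrow> v \<bullet>c w = 0 \<Longrightarrow> vec_normalize v \<bullet>c vec_normalize w = 0"
  unfolding vec_normalize_def by (subst cscalar_prod_smult[of _ n]) auto

lemma unit_eigenvector_exists:
  assumes A: "(A::complex mat) \<in> carrier_mat n n" and n: "0 < n"
  shows "\<exists>e v. v \<in> carrier_vec n \<and> v \<bullet>c v = 1 \<and> A *\<^sub>v v = e \<cdot>\<^sub>v v"
proof -
  have "degree (char_poly A) = n" using degree_monic_char_poly[OF A] by simp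
  then have "\<not> constant (poly (char_poly A))" using n by (simp add: constant_degree)
  then obtain e where "poly (char_poly A) e = 0" using fundamental_theorem_of_algebra by blast
  then obtain v where v: "v \<in> carrier_vec n" "v \<noteq> 0\<^sub>v n" "A *\<^sub>v v = e \<cdot>\<^sub>v v"
    using eigenvalue_root_char_poly[OF A] A by (auto simp: eigenvalue_def eigenvector_def)
  have "A *\<^sub>v vec_normalize v = e \<cdot>\<^sub>v vec_normalize v"
    unfolding vec_normalize_def using v A by (intro eq_vecI) (auto simp: mult_mat_vec)
  then show ?thesis using v vec_normalize_unit by (metis vec_normalize_carrier)
qed

lemma unitary_mat_of_cols:
  assumes us: "length us = n" "\<And>i. i < n \<Longrightarrow> us ! i \<in> carrier_vec n"
    and orth: "\<And>i j. i < n \<Longrightarrow> j < n \<Longrightarrow> us ! i \<bullet>c us ! j = (if i = j then 1 else 0)"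
  shows "unitary_mat n (mat_of_cols n us)"
proof -
  define W where "W = mat_of_cols n us"
  have W: "W \<in> carrier_mat n n" using mat_of_cols_carrier(1)[of n us] us by (simp add: W_def)
  have "mat_adjoint W * W = 1\<^sub>m n"
  proof (rule eq_matI)
    fix i j assume "i < dim_row (1\<^sub>m n :: complex mat)" "j < dim_col (1\<^sub>m n :: complex mat)"
    then have ij: "i < n" "j < n" by auto
    have "(mat_adjoint W * W) $$ (i,j) = (\<Sum>k<n. us ! j $ k * cnj (us ! i $ k))"
      using W ij us by (simp add: index_mult_mat_sum[of _ n n _ n] W_def mat_of_cols_index mult.commute
          del: index_mult_mat(1))
    also have "\<dots> = 1\<^sub>m n $$ (i,j)"
      using orth[OF ij(2,1)] cscalar_prod_sum[OF us(2)[OF ij(2)] us(2)[OF ij(1)]] ij by auto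
    finally show "(mat_adjoint W * W) $$ (i,j) = 1\<^sub>m n $$ (i,j)" .
  qed (use W in auto)
  then have "W * mat_adjoint W = 1\<^sub>m n"
    using mat_mult_left_right_inverse[of "mat_adjoint W" n W] W by simp
  then show ?thesis using W by (simp add: unitary_mat_def W_def)
qed

lemma unitary_mat_with_first_col:
  assumes v: "v \<in> carrier_vec n" "v \<bullet>c v = 1"
  shows "\<exists>W. unitary_mat n W \<and> col W 0 = v"
proof -
  interpret cof_vec_space n "TYPE(complex)" .
  have v0: "v \<noteq> 0\<^sub>v n" using v by auto
  have n: "0 < n" using v v0 by (metis carrier_vecD gr0I eq_vecI index_zero_vec(2) less_zeroE)
  define b where "b = basis_completion v"
  define ws where "ws = gram_schmidt n b"
  from basis_completion[OF v(1) v0, folded b_def]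
  have dist_b: "distinct b" and indep: "\<not> lin_dep (set b)" and bc: "set b \<subseteq> carrier_vec n"
    and hdb: "hd b = v" and len_b: "length b = n" by auto
  from hdb len_b n obtain vs where bv: "b = v # vs" by (cases b) auto
  from gram_schmidt_result[OF bc dist_b indep refl, folded ws_def]
  have ws: "set ws \<subseteq> carrier_vec n" "corthogonal ws" "length ws = n" by (auto simp: len_b)
  have ws_carrier: "\<And>i. i < n \<Longrightarrow> ws ! i \<in> carrier_vec n" using ws by auto
  define us where "us = map vec_normalize ws"
  have us: "length us = n" "\<And>i. i < n \<Longrightarrow> us ! i \<in> carrier_vec n"
    using ws ws_carrier by (auto simp: us_def)
  have us_orth: "us ! i \<bullet>c us ! j = (if i = j then 1 else 0)" if ij: "i < n" "j < n" for i j
  proof -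
    have w: "ws ! i \<in> carrier_vec n" "ws ! j \<in> carrier_vec n" using ws_carrier ij by auto
    have "ws ! i \<noteq> 0\<^sub>v n"
      using corthogonalD[OF ws(2), of i i] ws ij w(1) by (auto simp: cscalar_prod_sum)
    then show ?thesis
      using corthogonalD[OF ws(2), of i j] vec_normalize_unit[OF w(1)] vec_normalize_orthogonal[OF w] ws ij
      by (auto simp: us_def)
  qed
  have "ws ! 0 = v" using n ws(3) bv v(1) by (metis gram_schmidt_hd hd_conv_nth list.size(3) not_less0 ws_def)
  then have "us ! 0 = v" using ws n v by (simp add: us_def vec_normalize_id)
  then have "col (mat_of_cols n us) 0 = v" using col_mat_of_cols[of 0 us n] us n v(1) by simp
  then show ?thesis using unitary_mat_of_cols[OF us us_orth] by blast
qed

lemma hermitian_mat_unitary_conj: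
  assumes "hermitian_mat n A" "unitary_mat n W"
  shows "hermitian_mat n (mat_adjoint W * A * W)"
proof -
  have A: "A \<in> carrier_mat n n" "mat_adjoint A = A" and W: "W \<in> carrier_mat n n"
    using assms by (auto simp: hermitian_mat_def dest: unitary_matD)
  have "mat_adjoint (mat_adjoint W * A * W) = mat_adjoint W * (mat_adjoint A * W)"
    using A W by (simp add: mat_adjoint_mult[of _ n n _ n])
  also have "\<dots> = mat_adjoint W * A * W"
    using A W by (simp add: assoc_mult_mat[of _ n n _ n _ n])
  finally show ?thesis using A W by (simp add: hermitian_mat_def)
qed

lemma unitary_conj_eigen_first_col:
  assumes A: "A \<in> carrier_mat n n" and W: "unitary_mat n W" and i: "i < n"
    and ev: "A *\<^sub>v col W 0 = e \<cdot>\<^sub>v col W 0"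
  shows "(mat_adjoint W * A * W) $$ (i,0) = (if i = 0 then e else 0)"
proof -
  have Wc: "W \<in> carrier_mat n n" using W by (rule unitary_matD)
  have "col (mat_adjoint W * A * W) 0 = (mat_adjoint W * A) *\<^sub>v col W 0"
    by (rule col_mult2[of _ n n _ n]) (use A Wc i in auto)
  also have "\<dots> = mat_adjoint W *\<^sub>v (A *\<^sub>v col W 0)"
    by (rule assoc_mult_mat_vec[of _ n n _ n]) (use A Wc in auto)
  also have "\<dots> = e \<cdot>\<^sub>v (mat_adjoint W *\<^sub>v col W 0)"
    unfolding ev by (rule mult_mat_vec[of _ n n]) (use Wc in auto)
  also have "mat_adjoint W *\<^sub>v col W 0 = col (mat_adjoint W * W) 0"
    by (rule col_mult2[symmetric, of _ n n _ n]) (use Wc i in auto)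
  also have "col (mat_adjoint W * W) 0 = unit_vec n 0"
    using unitary_mat_adjoint_mult[OF W] i by simp
  finally have "col (mat_adjoint W * A * W) 0 $ i = (e \<cdot>\<^sub>v unit_vec n 0) $ i" by simp
  then show ?thesis using A Wc i by simp
qed

definition one_dsum_mat :: "nat \<Rightarrow> complex mat \<Rightarrow> complex mat" where
  "one_dsum_mat m U = mat (Suc m) (Suc m)
     (\<lambda>(i,j). if i = 0 \<or> j = 0 then (if i = j then 1 else 0) else U $$ (i - 1, j - 1))"

lemma one_dsum_mat_carrier [simp]: "one_dsum_mat m U \<in> carrier_mat (Suc m) (Suc m)"
  by (simp add: one_dsum_mat_def)

lemma index_conj_one_dsum_mat:
  assumes U: "U \<in> carrier_mat m m" and ij: "i < Suc m" "j < Suc m"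
  shows "(one_dsum_mat m U * real_diag_mat (Suc m) d * mat_adjoint (one_dsum_mat m U)) $$ (i,j)
      = (if i = 0 \<or> j = 0 then (if i = j then complex_of_real (d 0) else 0)
         else (U * real_diag_mat m (d \<circ> Suc) * mat_adjoint U) $$ (i - 1, j - 1))"
proof -
  let ?E = "one_dsum_mat m U"
  have "(?E * real_diag_mat (Suc m) d * mat_adjoint ?E) $$ (i,j)
      = ?E $$ (i,0) * d 0 * cnj (?E $$ (j,0)) + (\<Sum>l<m. ?E $$ (i,Suc l) * d (Suc l) * cnj (?E $$ (j,Suc l)))"
    unfolding index_conj_real_diag[OF one_dsum_mat_carrier one_dsum_mat_carrier ij] by (rule sum.lessThan_Suc_shift)
  also have "\<dots> = (if i = 0 \<or> j = 0 then (if i = j then complex_of_real (d 0) else 0)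
       else (U * real_diag_mat m (d \<circ> Suc) * mat_adjoint U) $$ (i - 1, j - 1))"
    using ij by (cases i; cases j) (auto simp: one_dsum_mat_def index_conj_real_diag[OF U U])
  finally show ?thesis .
qed

lemma unitary_one_dsum_mat:
  assumes U: "unitary_mat m U"
  shows "unitary_mat (Suc m) (one_dsum_mat m U)"
proof -
  let ?E = "one_dsum_mat m U"
  have Uc: "U \<in> carrier_mat m m" using U by (rule unitary_matD)
  have "?E * mat_adjoint ?E = ?E * real_diag_mat (Suc m) (\<lambda>_. 1) * mat_adjoint ?E"
    by (simp add: real_diag_mat_one right_mult_one_mat[OF one_dsum_mat_carrier])
  also have "\<dots> = 1\<^sub>m (Suc m)"
  proof (rule eq_matI)
    fix i j assume "i < dim_row (1\<^sub>m (Suc m) :: complex mat)" "j < dim_col (1\<^sub>m (Suc m) :: complex mat)"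
    then have ij: "i < Suc m" "j < Suc m" by auto
    show "(?E * real_diag_mat (Suc m) (\<lambda>_. 1) * mat_adjoint ?E) $$ (i,j) = 1\<^sub>m (Suc m) $$ (i,j)"
      using index_conj_one_dsum_mat[OF Uc ij, of "\<lambda>_. 1"] unitary_matD(2)[OF U] Uc ij
      by (auto simp: real_diag_mat_one comp_def)
  qed (auto simp: one_dsum_mat_def)
  finally show ?thesis by (simp add: unitary_mat_def)
qed

lemma hermitian_deflation:
  fixes A :: "complex mat"
  assumes A: "hermitian_mat (Suc m) A"
    and col0: "\<And>i. i < Suc m \<Longrightarrow> A $$ (i,0) = (if i = 0 then e else 0)"
    and IH: "\<And>B. hermitian_mat m B \<Longrightarrow> \<exists>U d. unitary_mat m U \<and> B = U * real_diag_mat m d * mat_adjoint U"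
  shows "\<exists>U d. unitary_mat (Suc m) U \<and> A = U * real_diag_mat (Suc m) d * mat_adjoint U"
proof -
  have Ac: "A \<in> carrier_mat (Suc m) (Suc m)" using A by (simp add: hermitian_mat_def)
  have Aij: "A $$ (i,j) = cnj (A $$ (j,i))" if "i < Suc m" "j < Suc m" for i j
    using A that unfolding hermitian_mat_def by (metis index_mat_adjoint carrier_matD(1,2))
  have e_real: "e = complex_of_real (Re e)"
    using Aij[of 0 0] col0[of 0] by (auto simp: complex_eq_iff)
  have row0: "A $$ (0,j) = (if j = 0 then complex_of_real (Re e) else 0)" if "j < Suc m" for j
    using Aij[of 0 j] col0[of j] e_real that by auto
  define A' where "A' = mat m m (\<lambda>(i,j). A $$ (Suc i, Suc j))"
  have "hermitian_mat m A'"
    unfolding hermitian_mat_def by (auto simp: A'_def intro!: eq_matI) (metis Aij Suc_mono)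
  then obtain U d where U: "unitary_mat m U" and A': "A' = U * real_diag_mat m d * mat_adjoint U"
    using IH by blast
  define d' where "d' = (\<lambda>i. if i = 0 then Re e else d (i - 1))"
  have "A = one_dsum_mat m U * real_diag_mat (Suc m) d' * mat_adjoint (one_dsum_mat m U)"
  proof (rule eq_matI)
    fix i j assume "i < dim_row (one_dsum_mat m U * real_diag_mat (Suc m) d' * mat_adjoint (one_dsum_mat m U))"
      "j < dim_col (one_dsum_mat m U * real_diag_mat (Suc m) d' * mat_adjoint (one_dsum_mat m U))"
    then have ij: "i < Suc m" "j < Suc m" by (simp_all add: one_dsum_mat_def)
    have "d' \<circ> Suc = d" by (auto simp: d'_def)
    then show "A $$ (i,j) = (one_dsum_mat m U * real_diag_mat (Suc m) d' * mat_adjoint (one_dsum_mat m U)) $$ (i,j)"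
      using index_conj_one_dsum_mat[OF unitary_matD(1)[OF U] ij, of d'] col0[OF ij(1)] row0[OF ij(2)] ij
      by (cases i; cases j) (auto simp: d'_def A'_def simp flip: A')
  qed (use Ac in \<open>auto simp: one_dsum_mat_def\<close>)
  then show ?thesis using unitary_one_dsum_mat[OF U] by blast
qed

lemma hermitian_spectral_decomposition:
  assumes "hermitian_mat n A"
  shows "\<exists>U d. unitary_mat n U \<and> A = U * real_diag_mat n d * mat_adjoint U"
  using assms
proof (induction n arbitrary: A)
  case 0
  then have "A \<in> carrier_mat 0 0" by (simp add: hermitian_mat_def)
  then have "unitary_mat 0 (1\<^sub>m 0) \<and> A = 1\<^sub>m 0 * real_diag_mat 0 (\<lambda>_. 0) * mat_adjoint (1\<^sub>m 0)"
    by (auto simp: unitary_mat_def intro!: eq_matI)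
  then show ?case by blast
next
  case (Suc m)
  have A: "A \<in> carrier_mat (Suc m) (Suc m)" using Suc.prems by (simp add: hermitian_mat_def)
  obtain e v where v: "v \<in> carrier_vec (Suc m)" "v \<bullet>c v = 1" "A *\<^sub>v v = e \<cdot>\<^sub>v v"
    using unit_eigenvector_exists[OF A] by blast
  obtain W where W: "unitary_mat (Suc m) W" "col W 0 = v"
    using unitary_mat_with_first_col[OF v(1,2)] by blast
  have Wc: "W \<in> carrier_mat (Suc m) (Suc m)" using W(1) by (rule unitary_matD)
  obtain U d where U: "unitary_mat (Suc m) U"
    and A': "mat_adjoint W * A * W = U * real_diag_mat (Suc m) d * mat_adjoint U"
    using hermitian_deflation[OF hermitian_mat_unitary_conj[OF Suc.prems W(1)]
        unitary_conj_eigen_first_col[OF A W(1)] Suc.IH] v(3) W(2) by blast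
  have Uc: "U \<in> carrier_mat (Suc m) (Suc m)" using U by (rule unitary_matD)
  have "W * (mat_adjoint W * A * W) * mat_adjoint W = (W * mat_adjoint W) * A * (W * mat_adjoint W)"
    using A Wc by (simp add: assoc_mult_mat[of _ "Suc m" "Suc m" _ "Suc m" _ "Suc m"])
  then have "A = W * (mat_adjoint W * A * W) * mat_adjoint W"
    using A unitary_matD(2)[OF W(1)] by simp
  also have "\<dots> = (W * U) * real_diag_mat (Suc m) d * mat_adjoint (W * U)"
    unfolding A' using Wc Uc
    by (simp add: mat_adjoint_mult[of _ "Suc m" "Suc m" _ "Suc m"] assoc_mult_mat[of _ "Suc m" "Suc m" _ "Suc m" _ "Suc m"])
  finally show ?case using unitary_mat_mult[OF W(1) U] by blast
qed

lemma mat_fun_spectral: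
  assumes "hermitian_mat n A"
  shows "\<exists>U d. unitary_mat n U \<and> A = U * real_diag_mat n d * mat_adjoint U \<and>
           mat_fun f A = U * real_diag_mat n (f \<circ> d) * mat_adjoint U"
proof -
  have n: "dim_row A = n" using assms unfolding hermitian_mat_def by (blast dest: carrier_matD(1))
  obtain U d where "unitary_mat n U" "A = U * real_diag_mat n d * mat_adjoint U"
    using hermitian_spectral_decomposition[OF assms] by blast
  then have "\<exists>B U d. unitary_mat n U \<and> A = U * real_diag_mat n d * mat_adjoint U \<and>
        B = U * real_diag_mat n (f \<circ> d) * mat_adjoint U" by blast
  from someI_ex[OF this] show ?thesis unfolding mat_fun_def n .
qed

lemma mat_log_spectral:
  assumes "hermitian_mat n A"
  obtains U d where "unitary_mat n U" "A = U * real_diag_mat n d * mat_adjoint U"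
    "mat_log A = U * real_diag_mat n (ln \<circ> d) * mat_adjoint U"
  using mat_fun_spectral[OF assms, of ln] unfolding mat_log_def by blast

lemma spectral_eigenvalue_quad_form:
  assumes U: "unitary_mat n U" and A: "A = U * real_diag_mat n d * mat_adjoint U" and i: "i < n"
  shows "conjugate (col U i) \<bullet> (A *\<^sub>v col U i) = complex_of_real (d i)"
proof -
  have Uc: "U \<in> carrier_mat n n" using U by (rule unitary_matD)
  have Ac: "A \<in> carrier_mat n n" using A Uc by simp
  have "conjugate (col U i) \<bullet> (A *\<^sub>v col U i) = (mat_adjoint U * (A * U)) $$ (i,i)"
    using Ac Uc i by (simp add: index_mult_mat_sum[of _ n n _ n] scalar_prod_def atLeast0LessThan
        del: index_mult_mat(1))
  also have "mat_adjoint U * (A * U) = (mat_adjoint U * U) * real_diag_mat n d * (mat_adjoint U * U)"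
    unfolding A using Uc by (simp add: assoc_mult_mat[of _ n n _ n _ n])
  finally show ?thesis using i unitary_mat_adjoint_mult[OF U] by simp
qed

lemma unitary_mat_col_nonzero:
  assumes U: "unitary_mat n U" and i: "i < n"
  shows "col U i \<noteq> 0\<^sub>v n"
proof
  assume "col U i = 0\<^sub>v n"
  then have "(mat_adjoint U * U) $$ (i,i) = 0"
    using unitary_matD(1)[OF U] i by (simp add: scalar_prod_def)
  then show False using unitary_mat_adjoint_mult[OF U] i by simp
qed

lemma pd_mat_imp_psd_mat:
  assumes "pd_mat n A"
  shows "psd_mat n A"
  unfolding psd_mat_def
proof (intro conjI ballI)
  show "hermitian_mat n A" using assms by (simp add: pd_mat_def)
  fix v :: "complex vec" assume "v \<in> carrier_vec n"
  then show "0 \<le> Re (conjugate v \<bullet> (A *\<^sub>v v))"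
    using assms by (cases "v = 0\<^sub>v n") (auto simp: pd_mat_def scalar_prod_def less_imp_le)
qed

lemma psd_mat_eigenvalue_nonneg:
  assumes "psd_mat n A" "unitary_mat n U" "A = U * real_diag_mat n d * mat_adjoint U" "i < n"
  shows "0 \<le> d i"
proof -
  have "0 \<le> Re (conjugate (col U i) \<bullet> (A *\<^sub>v col U i))"
    using assms(1,4) unitary_matD(1)[OF assms(2)] by (simp add: psd_mat_def)
  then show ?thesis using spectral_eigenvalue_quad_form[OF assms(2-4)] by simp
qed

lemma pd_mat_eigenvalue_pos:
  assumes "pd_mat n A" "unitary_mat n U" "A = U * real_diag_mat n d * mat_adjoint U" "i < n"
  shows "0 < d i"
proof -
  have "0 < Re (conjugate (col U i) \<bullet> (A *\<^sub>v col U i))"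
    using assms(1,4) unitary_matD(1)[OF assms(2)] unitary_mat_col_nonzero[OF assms(2,4)]
    by (simp add: pd_mat_def)
  then show ?thesis using spectral_eigenvalue_quad_form[OF assms(2-4)] by simp
qed

section \<open>A variational formula in spectral coordinates\<close>

text \<open>For A = U diag(a) U* and B = W diag(b) W*, the weight of (i, j) is the squared overlap of
  the i-th eigenvector of A with the j-th eigenvector of B.  These weights form a doubly
  stochastic matrix, and traces of products of functions of A and B become weighted sums
  over them.\<close>

definition transition_weight :: "complex mat \<Rightarrow> complex mat \<Rightarrow> nat \<Rightarrow> nat \<Rightarrow> real" where
  "transition_weight U W i j = (cmod ((mat_adjoint W * U) $$ (j,i)))\<^sup>2"

lemma transition_weight_sums:
  assumes U: "unitary_mat n U" and W: "unitary_mat n W"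
  shows "i < n \<Longrightarrow> (\<Sum>j<n. transition_weight U W i j) = 1"
    and "j < n \<Longrightarrow> (\<Sum>i<n. transition_weight U W i j) = 1"
proof -
  have Uc: "U \<in> carrier_mat n n" and Wc: "W \<in> carrier_mat n n" using U W by (auto dest: unitary_matD)
  define C where "C = mat_adjoint W * U"
  have Cc: "C \<in> carrier_mat n n" using Uc Wc by (simp add: C_def)
  have CH: "mat_adjoint C = mat_adjoint U * W"
    unfolding C_def using Uc Wc by (simp add: mat_adjoint_mult[of _ n n _ n])
  have "C * mat_adjoint C = mat_adjoint W * (U * (mat_adjoint U * W))"
    unfolding CH unfolding C_def using Uc Wc by (simp add: assoc_mult_mat[of _ n n _ n _ n])
  then have CC1: "C * mat_adjoint C = 1\<^sub>m n"
    using unitary_mat_cancel(2)[OF U, of W n] Wc unitary_mat_adjoint_mult[OF W] by simp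
  have "mat_adjoint C * C = mat_adjoint U * (W * (mat_adjoint W * U))"
    unfolding CH unfolding C_def using Uc Wc by (simp add: assoc_mult_mat[of _ n n _ n _ n])
  then have CC2: "mat_adjoint C * C = 1\<^sub>m n"
    using unitary_mat_cancel(2)[OF W, of U n] Uc unitary_mat_adjoint_mult[OF U] by simp
  show "(\<Sum>j<n. transition_weight U W i j) = 1" if i: "i < n"
  proof -
    have "complex_of_real (\<Sum>j<n. transition_weight U W i j) = (mat_adjoint C * C) $$ (i,i)"
      using Cc i by (simp add: index_mult_mat_sum[of _ n n _ n] transition_weight_def
          complex_norm_square C_def[symmetric] mult.commute del: of_real_power index_mult_mat(1))
    then show ?thesis using CC2 i by (metis index_one_mat(1) of_real_eq_1_iff)
  qed
  show "(\<Sum>i<n. transition_weight U W i j) = 1" if j: "j < n"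
  proof -
    have "complex_of_real (\<Sum>i<n. transition_weight U W i j) = (C * mat_adjoint C) $$ (j,j)"
      using Cc j by (simp add: index_mult_mat_adjoint[of _ n n _ n] transition_weight_def
          complex_norm_square C_def[symmetric] del: of_real_power index_mult_mat(1))
    then show ?thesis using CC1 j by (metis index_one_mat(1) of_real_eq_1_iff)
  qed
qed

lemma transition_weight_self:
  "unitary_mat n U \<Longrightarrow> i < n \<Longrightarrow> j < n \<Longrightarrow> transition_weight U U i j = (if i = j then 1 else 0)"
  using unitary_mat_adjoint_mult by (simp add: transition_weight_def)

lemma mat_trace_spectral_mult:
  assumes U: "unitary_mat n U" and W: "unitary_mat n W"
  shows "mat_trace ((U * real_diag_mat n x * mat_adjoint U) * (W * real_diag_mat n y * mat_adjoint W))
    = (\<Sum>i<n. \<Sum>j<n. complex_of_real (transition_weight U W i j * x i * y j))"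
proof -
  have Uc: "U \<in> carrier_mat n n" and Wc: "W \<in> carrier_mat n n" using U W by (auto dest: unitary_matD)
  define C where "C = mat_adjoint W * U"
  have Cc: "C \<in> carrier_mat n n" using Uc Wc by (simp add: C_def)
  have CH: "mat_adjoint C = mat_adjoint U * W"
    unfolding C_def using Uc Wc by (simp add: mat_adjoint_mult[of _ n n _ n])
  have "(U * real_diag_mat n x * mat_adjoint U) * (W * real_diag_mat n y * mat_adjoint W)
      = U * ((real_diag_mat n x * (mat_adjoint C * real_diag_mat n y * C)) * mat_adjoint U)"
    unfolding CH unfolding C_def using Uc Wc unitary_matD(2)[OF U]
    by (simp add: assoc_mult_mat[of _ n n _ n _ n])
  then have "mat_trace ((U * real_diag_mat n x * mat_adjoint U) * (W * real_diag_mat n y * mat_adjoint W))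
      = mat_trace (real_diag_mat n x * (mat_adjoint C * real_diag_mat n y * mat_adjoint (mat_adjoint C)))"
    using mat_trace_unitary_conj[OF U] Cc by simp
  also have "\<dots> = (\<Sum>i<n. complex_of_real (x i) * (\<Sum>j<n. cnj (C $$ (j,i)) * y j * C $$ (j,i)))"
    using Cc by (intro trans[OF mat_trace_real_diag_mult[of _ n] sum.cong] refl arg_cong2[where f = "(*)"])
      (auto simp: index_adjoint_real_diag_mult[of _ n n _ n] simp del: index_mult_mat(1))
  also have "\<dots> = (\<Sum>i<n. \<Sum>j<n. complex_of_real (transition_weight U W i j * x i * y j))"
    unfolding sum_distrib_left transition_weight_def C_def[symmetric]
    by (intro sum.cong refl) (simp add: complex_norm_square mult_ac del: of_real_power)
  finally show ?thesis .
qed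

lemma quadratic_complex_bound:
  assumes k: "(k::real) > 0"
  shows "2 * Re (c * x) - k * (cmod x)\<^sup>2 \<le> (cmod c)\<^sup>2 / k"
    and "x = cnj c / complex_of_real k \<Longrightarrow> 2 * Re (c * x) - k * (cmod x)\<^sup>2 = (cmod c)\<^sup>2 / k"
proof -
  have gap: "(cmod c)\<^sup>2 / k - (2 * Re (c * x) - k * (cmod x)\<^sup>2)
      = ((Re c - k * Re x)\<^sup>2 + (Im c + k * Im x)\<^sup>2) / k"
    unfolding cmod_power2 using k by (simp add: field_simps power2_eq_square)
  moreover have "0 \<le> ((Re c - k * Re x)\<^sup>2 + (Im c + k * Im x)\<^sup>2) / k" using k by simp
  ultimately show "2 * Re (c * x) - k * (cmod x)\<^sup>2 \<le> (cmod c)\<^sup>2 / k" by linarith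
  assume "x = cnj c / complex_of_real k"
  then have "Re x = Re c / k" "Im x = - Im c / k"
    using k by (auto simp: Re_divide_of_real Im_divide_of_real)
  then have "(Re c - k * Re x)\<^sup>2 + (Im c + k * Im x)\<^sup>2 = 0" using k by simp
  then show "2 * Re (c * x) - k * (cmod x)\<^sup>2 = (cmod c)\<^sup>2 / k" using gap by simp
qed

text \<open>For fixed Z the objective is linear in the pair (A, B), so its maximum over Z,
  computed in spectral coordinates below, is jointly convex in (A, B).  This convexity,
  in the form of monotonicity under the partial trace, is what drives the whole proof.\<close>

definition quad_objective :: "real \<Rightarrow> complex mat \<Rightarrow> complex mat \<Rightarrow> complex mat \<Rightarrow> real" where
  "quad_objective u A B Z = 2 * Re (mat_trace (B * Z)) - (1 - u) * Re (mat_trace (mat_adjoint Z * A * Z))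
     - u * Re (mat_trace (mat_adjoint Z * Z * B))"

definition quad_objective_max ::
  "nat \<Rightarrow> real \<Rightarrow> complex mat \<Rightarrow> complex mat \<Rightarrow> (nat \<Rightarrow> real) \<Rightarrow> (nat \<Rightarrow> real) \<Rightarrow> real" where
  "quad_objective_max n u U W a b =
     (\<Sum>i<n. \<Sum>j<n. transition_weight U W i j * (b j)\<^sup>2 / ((1 - u) * a i + u * b j))"

lemma mat_trace_adjoint_real_diag_mult:
  assumes N: "(N::complex mat) \<in> carrier_mat n n"
  shows "Re (mat_trace (mat_adjoint N * real_diag_mat n a * N)) = (\<Sum>i<n. \<Sum>j<n. a i * (cmod (N $$ (i,j)))\<^sup>2)"
proof -
  have "mat_trace (mat_adjoint N * real_diag_mat n a * N) = (\<Sum>j<n. \<Sum>i<n. cnj (N $$ (i,j)) * a i * N $$ (i,j))"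
    using N by (simp add: mat_trace_def index_adjoint_real_diag_mult[of _ n n _ n] del: index_mult_mat(1))
  also have "\<dots> = (\<Sum>j<n. \<Sum>i<n. complex_of_real (a i * (cmod (N $$ (i,j)))\<^sup>2))"
    by (intro sum.cong refl) (simp add: complex_norm_square mult_ac del: of_real_power)
  finally have "Re (mat_trace (mat_adjoint N * real_diag_mat n a * N)) = (\<Sum>j<n. \<Sum>i<n. a i * (cmod (N $$ (i,j)))\<^sup>2)"
    by simp
  then show ?thesis by (rule trans) (rule sum.swap)
qed

lemma mat_trace_adjoint_mult_real_diag:
  assumes N: "(N::complex mat) \<in> carrier_mat n n"
  shows "Re (mat_trace (mat_adjoint N * N * real_diag_mat n b)) = (\<Sum>i<n. \<Sum>j<n. (cmod (N $$ (i,j)))\<^sup>2 * b j)"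
proof -
  have "mat_trace (mat_adjoint N * N * real_diag_mat n b) = (\<Sum>j<n. (\<Sum>i<n. cnj (N $$ (i,j)) * N $$ (i,j)) * b j)"
    using N by (simp add: mat_trace_mult_real_diag[of _ n] index_mult_mat_sum[of _ n n _ n]
        del: index_mult_mat(1))
  also have "\<dots> = (\<Sum>j<n. \<Sum>i<n. complex_of_real ((cmod (N $$ (i,j)))\<^sup>2 * b j))"
    by (intro sum.cong refl) (simp add: complex_norm_square sum_distrib_left mult_ac del: of_real_power)
  finally have "Re (mat_trace (mat_adjoint N * N * real_diag_mat n b)) = (\<Sum>j<n. \<Sum>i<n. (cmod (N $$ (i,j)))\<^sup>2 * b j)"
    by simp
  then show ?thesis by (rule trans) (rule sum.swap)
qed

lemma quad_objective_unitary_coords: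
  assumes U: "unitary_mat n U" and W: "unitary_mat n W" and N: "N \<in> carrier_mat n n"
  shows "quad_objective u (U * real_diag_mat n a * mat_adjoint U) (W * real_diag_mat n b * mat_adjoint W)
           (U * N * mat_adjoint W)
      = (\<Sum>i<n. \<Sum>j<n. 2 * Re (complex_of_real (b j) * (mat_adjoint W * U) $$ (j,i) * N $$ (i,j))
            - ((1 - u) * a i + u * b j) * (cmod (N $$ (i,j)))\<^sup>2)"
proof -
  have Uc: "U \<in> carrier_mat n n" and Wc: "W \<in> carrier_mat n n" using U W by (auto dest: unitary_matD)
  have cU: "\<And>X. X \<in> carrier_mat n n \<Longrightarrow> mat_adjoint U * (U * X) = X"
    and cW: "\<And>X. X \<in> carrier_mat n n \<Longrightarrow> mat_adjoint W * (W * X) = X"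
    using unitary_mat_cancel(1)[OF U] unitary_mat_cancel(1)[OF W] by blast+
  define C where "C = mat_adjoint W * U"
  have Cc: "C \<in> carrier_mat n n" using Uc Wc by (simp add: C_def)
  define A where "A = U * real_diag_mat n a * mat_adjoint U"
  define B where "B = W * real_diag_mat n b * mat_adjoint W"
  define Z where "Z = U * N * mat_adjoint W"
  have ZH: "mat_adjoint Z = W * (mat_adjoint N * mat_adjoint U)"
    unfolding Z_def using Uc Wc N by (simp add: mat_adjoint_mult[of _ n n _ n])
  have "B * Z = W * ((real_diag_mat n b * (C * N)) * mat_adjoint W)"
    unfolding B_def Z_def C_def using Uc Wc N by (simp add: assoc_mult_mat[of _ n n _ n _ n])
  then have "mat_trace (B * Z) = (\<Sum>j<n. complex_of_real (b j) * (\<Sum>i<n. C $$ (j,i) * N $$ (i,j)))"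
    using mat_trace_unitary_conj[OF W, of "real_diag_mat n b * (C * N)"] Cc N
    by (simp add: mat_trace_real_diag_mult[of _ n] index_mult_mat_sum[of _ n n _ n] del: index_mult_mat(1))
  then have t1: "Re (mat_trace (B * Z)) = (\<Sum>j<n. \<Sum>i<n. Re (complex_of_real (b j) * C $$ (j,i) * N $$ (i,j)))"
    by (simp add: sum_distrib_left mult.assoc)
  have "mat_adjoint Z * A * Z = W * ((mat_adjoint N * real_diag_mat n a * N) * mat_adjoint W)"
    unfolding ZH unfolding A_def Z_def using Uc Wc N by (simp add: assoc_mult_mat[of _ n n _ n _ n] cU)
  then have t2: "Re (mat_trace (mat_adjoint Z * A * Z)) = (\<Sum>i<n. \<Sum>j<n. a i * (cmod (N $$ (i,j)))\<^sup>2)"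
    using mat_trace_unitary_conj[OF W, of "mat_adjoint N * real_diag_mat n a * N"] N
      mat_trace_adjoint_real_diag_mult[OF N] by simp
  have "mat_adjoint Z * Z * B = W * ((mat_adjoint N * N * real_diag_mat n b) * mat_adjoint W)"
    unfolding ZH unfolding B_def Z_def using Uc Wc N by (simp add: assoc_mult_mat[of _ n n _ n _ n] cU cW)
  then have t3: "Re (mat_trace (mat_adjoint Z * Z * B)) = (\<Sum>i<n. \<Sum>j<n. (cmod (N $$ (i,j)))\<^sup>2 * b j)"
    using mat_trace_unitary_conj[OF W, of "mat_adjoint N * N * real_diag_mat n b"] N
      mat_trace_adjoint_mult_real_diag[OF N] by simp
  have "quad_objective u A B Z = 2 * (\<Sum>j<n. \<Sum>i<n. Re (complex_of_real (b j) * C $$ (j,i) * N $$ (i,j)))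
      - (1 - u) * (\<Sum>i<n. \<Sum>j<n. a i * (cmod (N $$ (i,j)))\<^sup>2)
      - u * (\<Sum>i<n. \<Sum>j<n. (cmod (N $$ (i,j)))\<^sup>2 * b j)"
    unfolding quad_objective_def t1 t2 t3 ..
  also have "\<dots> = (\<Sum>i<n. \<Sum>j<n. 2 * Re (complex_of_real (b j) * C $$ (j,i) * N $$ (i,j))
            - ((1 - u) * a i + u * b j) * (cmod (N $$ (i,j)))\<^sup>2)"
    by (subst sum.swap) (simp add: sum_distrib_left sum_subtractf algebra_simps)
  finally show ?thesis unfolding A_def B_def Z_def C_def .
qed

lemma quad_objective_le_max:
  assumes U: "unitary_mat n U" and W: "unitary_mat n W"
    and a: "\<And>i. i < n \<Longrightarrow> 0 \<le> a i" and b: "\<And>j. j < n \<Longrightarrow> 0 < b j"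
    and u: "0 < u" "u < 1" and Z: "Z \<in> carrier_mat n n"
  shows "quad_objective u (U * real_diag_mat n a * mat_adjoint U) (W * real_diag_mat n b * mat_adjoint W) Z
     \<le> quad_objective_max n u U W a b"
proof -
  have Uc: "U \<in> carrier_mat n n" and Wc: "W \<in> carrier_mat n n" using U W by (auto dest: unitary_matD)
  define N where "N = mat_adjoint U * Z * W"
  have N: "N \<in> carrier_mat n n" using Uc Wc Z by (simp add: N_def)
  have "U * N * mat_adjoint W = U * (mat_adjoint U * (Z * (W * mat_adjoint W)))"
    unfolding N_def using Uc Wc Z by (simp add: assoc_mult_mat[of _ n n _ n _ n])
  also have "\<dots> = Z" using unitary_matD(2)[OF W] Z unitary_mat_cancel(2)[OF U, of Z n] by simp
  finally have ZN: "Z = U * N * mat_adjoint W" by simp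
  show ?thesis
    unfolding ZN quad_objective_unitary_coords[OF U W N] quad_objective_max_def
  proof (intro sum_mono)
    fix i j assume "i \<in> {..<n}" "j \<in> {..<n}"
    then have k: "0 < (1 - u) * a i + u * b j" using a b u by (simp add: add_nonneg_pos)
    have w: "(cmod (complex_of_real (b j) * (mat_adjoint W * U) $$ (j, i)))\<^sup>2 = transition_weight U W i j * (b j)\<^sup>2"
      by (simp add: transition_weight_def norm_mult power_mult_distrib)
    show "2 * Re (complex_of_real (b j) * (mat_adjoint W * U) $$ (j, i) * N $$ (i, j)) -
         ((1 - u) * a i + u * b j) * (cmod (N $$ (i, j)))\<^sup>2
         \<le> transition_weight U W i j * (b j)\<^sup>2 / ((1 - u) * a i + u * b j)"
      unfolding w[symmetric] by (rule quadratic_complex_bound(1)[OF k])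
  qed
qed

lemma quad_objective_max_attained:
  assumes U: "unitary_mat n U" and W: "unitary_mat n W"
    and a: "\<And>i. i < n \<Longrightarrow> 0 \<le> a i" and b: "\<And>j. j < n \<Longrightarrow> 0 < b j" and u: "0 < u" "u < 1"
  shows "\<exists>Z \<in> carrier_mat n n. quad_objective u (U * real_diag_mat n a * mat_adjoint U)
           (W * real_diag_mat n b * mat_adjoint W) Z = quad_objective_max n u U W a b"
proof -
  have Uc: "U \<in> carrier_mat n n" and Wc: "W \<in> carrier_mat n n" using U W by (auto dest: unitary_matD)
  define N where "N = mat n n (\<lambda>(i,j). cnj (complex_of_real (b j) * (mat_adjoint W * U) $$ (j, i))
      / complex_of_real ((1 - u) * a i + u * b j))"
  have N: "N \<in> carrier_mat n n" by (simp add: N_def)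
  have "quad_objective u (U * real_diag_mat n a * mat_adjoint U) (W * real_diag_mat n b * mat_adjoint W)
      (U * N * mat_adjoint W) = quad_objective_max n u U W a b"
    unfolding quad_objective_unitary_coords[OF U W N] quad_objective_max_def
  proof (intro sum.cong refl)
    fix i j assume ij: "i \<in> {..<n}" "j \<in> {..<n}"
    then have k: "0 < (1 - u) * a i + u * b j" using a b u by (simp add: add_nonneg_pos)
    have w: "(cmod (complex_of_real (b j) * (mat_adjoint W * U) $$ (j, i)))\<^sup>2 = transition_weight U W i j * (b j)\<^sup>2"
      by (simp add: transition_weight_def norm_mult power_mult_distrib)
    have "N $$ (i,j) = cnj (complex_of_real (b j) * (mat_adjoint W * U) $$ (j, i))
        / complex_of_real ((1 - u) * a i + u * b j)"
      using ij by (simp add: N_def)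
    then show "2 * Re (complex_of_real (b j) * (mat_adjoint W * U) $$ (j, i) * N $$ (i, j)) -
         ((1 - u) * a i + u * b j) * (cmod (N $$ (i, j)))\<^sup>2
         = transition_weight U W i j * (b j)\<^sup>2 / ((1 - u) * a i + u * b j)"
      unfolding w[symmetric] by (rule quadratic_complex_bound(2)[OF k])
  qed
  moreover have "U * N * mat_adjoint W \<in> carrier_mat n n" using Uc Wc N by simp
  ultimately show ?thesis by blast
qed

section \<open>The partial trace and its dual Z \<mapsto> Z \<otimes> 1\<close>

lemma index_pair_less: "i < dV \<Longrightarrow> j < dL \<Longrightarrow> i * dL + j < dV * (dL::nat)"
proof -
  assume "i < dV" "j < dL"
  then have "i * dL + j < (i + 1) * dL" by simp
  also have "\<dots> \<le> dV * dL" using \<open>i < dV\<close> by (intro mult_right_mono) auto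
  finally show ?thesis .
qed

lemma div_less_of_less_mult: "p < dV * dL \<Longrightarrow> p div dL < (dV::nat)"
  by (simp add: less_mult_imp_div_less)

lemma mod_less_of_less_mult: "p < dV * dL \<Longrightarrow> p mod dL < (dL::nat)"
  by (metis mod_less_divisor mult_0_right not_less_zero gr0I)

lemma sum_lessThan_mult_split:
  fixes f :: "nat \<Rightarrow> 'a::comm_monoid_add"
  shows "(\<Sum>p<dV * dL. f p) = (\<Sum>i<dV. \<Sum>j<dL. f (i * dL + j))"
proof -
  have "(\<Sum>p<dV * dL. f p) = (\<Sum>i<dV. sum f {i * dL..<i * dL + dL})"
    by (rule sum.nat_group[symmetric])
  also have "\<dots> = (\<Sum>i<dV. \<Sum>j<dL. f (i * dL + j))"
  proof (rule sum.cong[OF refl])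
    fix i
    have "sum f {i * dL..<i * dL + dL} = sum f {0 + i * dL..<dL + i * dL}" by (simp add: add.commute)
    also have "\<dots> = (\<Sum>j<dL. f (i * dL + j))"
      by (subst sum.shift_bounds_nat_ivl) (simp add: atLeast0LessThan add.commute)
    finally show "sum f {i * dL..<i * dL + dL} = (\<Sum>j<dL. f (i * dL + j))" .
  qed
  finally show ?thesis .
qed

lemma ptrace_L_carrier [simp]: "ptrace_L dV dL X \<in> carrier_mat dV dV"
  by (simp add: ptrace_L_def)

lemma dim_ptrace_L [simp]: "dim_row (ptrace_L dV dL X) = dV" "dim_col (ptrace_L dV dL X) = dV"
  by (auto simp: ptrace_L_def)

lemma index_ptrace_L:
  "i < dV \<Longrightarrow> i' < dV \<Longrightarrow> ptrace_L dV dL X $$ (i,i') = (\<Sum>j<dL. X $$ (i * dL + j, i' * dL + j))"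
  by (simp add: ptrace_L_def)

definition tensor_id_mat :: "nat \<Rightarrow> nat \<Rightarrow> complex mat \<Rightarrow> complex mat" where
  "tensor_id_mat dV dL Z = mat (dV * dL) (dV * dL)
     (\<lambda>(p,q). if p mod dL = q mod dL then Z $$ (p div dL, q div dL) else 0)"

lemma tensor_id_mat_carrier [simp]: "tensor_id_mat dV dL Z \<in> carrier_mat (dV * dL) (dV * dL)"
  by (simp add: tensor_id_mat_def)

lemma index_tensor_id_mat_pair:
  assumes "p < dV * dL" "i < dV" "j < dL"
  shows "tensor_id_mat dV dL Z $$ (p, i * dL + j) = (if p mod dL = j then Z $$ (p div dL, i) else 0)"
    and "tensor_id_mat dV dL Z $$ (i * dL + j, p) = (if p mod dL = j then Z $$ (i, p div dL) else 0)"
  using assms index_pair_less[of i dV j dL] by (auto simp: tensor_id_mat_def)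

lemma mat_trace_mult_tensor_id_mat:
  assumes X: "X \<in> carrier_mat (dV * dL) (dV * dL)" and Y: "Y \<in> carrier_mat dV dV"
  shows "mat_trace (X * tensor_id_mat dV dL Y) = mat_trace (ptrace_L dV dL X * Y)"
proof -
  let ?n = "dV * dL"
  have "mat_trace (X * tensor_id_mat dV dL Y) = (\<Sum>p<?n. \<Sum>q<?n. X $$ (p,q) * tensor_id_mat dV dL Y $$ (q,p))"
    using X by (simp add: mat_trace_def index_mult_mat_sum[of _ ?n ?n _ ?n] del: index_mult_mat(1))
  also have "\<dots> = (\<Sum>i<dV. \<Sum>j<dL. \<Sum>i'<dV. \<Sum>j'<dL.
      X $$ (i*dL+j, i'*dL+j') * tensor_id_mat dV dL Y $$ (i'*dL+j', i*dL+j))"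
    by (simp add: sum_lessThan_mult_split)
  also have "\<dots> = (\<Sum>i<dV. \<Sum>j<dL. \<Sum>i'<dV. \<Sum>j'<dL.
      if j' = j then X $$ (i*dL+j, i'*dL+j) * Y $$ (i', i) else 0)"
    by (intro sum.cong refl) (auto simp: tensor_id_mat_def index_pair_less)
  also have "\<dots> = (\<Sum>i<dV. \<Sum>j<dL. \<Sum>i'<dV. X $$ (i*dL+j, i'*dL+j) * Y $$ (i', i))"
    by (intro sum.cong refl) (simp add: sum.delta)
  also have "\<dots> = (\<Sum>i<dV. \<Sum>i'<dV. (\<Sum>j<dL. X $$ (i*dL+j, i'*dL+j)) * Y $$ (i', i))"
    by (rule sum.cong[OF refl], subst sum.swap) (simp add: sum_distrib_right)
  also have "\<dots> = mat_trace (ptrace_L dV dL X * Y)"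
    using Y by (simp add: mat_trace_def index_mult_mat_sum[of _ dV dV _ dV] index_ptrace_L
        del: index_mult_mat(1))
  finally show ?thesis .
qed

lemma mat_adjoint_tensor_id_mat:
  "Z \<in> carrier_mat dV dV \<Longrightarrow> mat_adjoint (tensor_id_mat dV dL Z) = tensor_id_mat dV dL (mat_adjoint Z)"
  by (rule eq_matI) (auto simp: tensor_id_mat_def div_less_of_less_mult)

lemma tensor_id_mat_mult:
  assumes Z: "Z \<in> carrier_mat dV dV" and Y: "Y \<in> carrier_mat dV dV"
  shows "tensor_id_mat dV dL Z * tensor_id_mat dV dL Y = tensor_id_mat dV dL (Z * Y)"
proof (rule eq_matI)
  fix p q assume "p < dim_row (tensor_id_mat dV dL (Z * Y))" "q < dim_col (tensor_id_mat dV dL (Z * Y))"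
  then have pq: "p < dV * dL" "q < dV * dL" by (auto simp: tensor_id_mat_def)
  have "(tensor_id_mat dV dL Z * tensor_id_mat dV dL Y) $$ (p,q)
      = (\<Sum>r<dV * dL. tensor_id_mat dV dL Z $$ (p,r) * tensor_id_mat dV dL Y $$ (r,q))"
    by (rule index_mult_mat_sum) (use pq in auto)
  also have "\<dots> = (\<Sum>i<dV. \<Sum>j<dL. tensor_id_mat dV dL Z $$ (p, i*dL+j) * tensor_id_mat dV dL Y $$ (i*dL+j, q))"
    by (rule sum_lessThan_mult_split)
  also have "\<dots> = (\<Sum>i<dV. \<Sum>j<dL. if j = p mod dL then
      (if p mod dL = q mod dL then Z $$ (p div dL, i) * Y $$ (i, q div dL) else 0) else 0)"
    using pq by (intro sum.cong refl) (auto simp: index_tensor_id_mat_pair)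
  also have "\<dots> = (\<Sum>i<dV. if p mod dL = q mod dL then Z $$ (p div dL, i) * Y $$ (i, q div dL) else 0)"
    by (intro sum.cong refl) (use mod_less_of_less_mult[OF pq(1)] in simp)
  also have "\<dots> = tensor_id_mat dV dL (Z * Y) $$ (p,q)"
    using pq Z Y div_less_of_less_mult[OF pq(1)] div_less_of_less_mult[OF pq(2)]
    by (simp add: tensor_id_mat_def index_mult_mat_sum[of _ dV dV _ dV] del: index_mult_mat(1))
  finally show "(tensor_id_mat dV dL Z * tensor_id_mat dV dL Y) $$ (p,q) = tensor_id_mat dV dL (Z * Y) $$ (p,q)" .
qed (auto simp: tensor_id_mat_def)

lemma tensor_id_mat_one: "tensor_id_mat dV dL (1\<^sub>m dV) = 1\<^sub>m (dV * dL)"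
proof (rule eq_matI)
  fix p q assume "p < dim_row (1\<^sub>m (dV * dL) :: complex mat)" "q < dim_col (1\<^sub>m (dV * dL) :: complex mat)"
  then have pq: "p < dV * dL" "q < dV * dL" by auto
  have "p = q \<longleftrightarrow> p div dL = q div dL \<and> p mod dL = q mod dL"
    by (metis div_mult_mod_eq)
  then show "tensor_id_mat dV dL (1\<^sub>m dV) $$ (p,q) = 1\<^sub>m (dV * dL) $$ (p,q)"
    using pq div_less_of_less_mult[OF pq(1)] div_less_of_less_mult[OF pq(2)] by (auto simp: tensor_id_mat_def)
qed (auto simp: tensor_id_mat_def)

lemma mat_trace_ptrace_L:
  assumes "X \<in> carrier_mat (dV * dL) (dV * dL)"
  shows "mat_trace (ptrace_L dV dL X) = mat_trace X"
  using mat_trace_mult_tensor_id_mat[OF assms, of "1\<^sub>m dV"] assms by (simp add: tensor_id_mat_one)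

lemma ptrace_L_hermitian:
  assumes X: "hermitian_mat (dV * dL) X"
  shows "hermitian_mat dV (ptrace_L dV dL X)"
proof -
  have Xij: "cnj (X $$ (q,p)) = X $$ (p,q)" if "p < dV * dL" "q < dV * dL" for p q
    using X that unfolding hermitian_mat_def by (metis index_mat_adjoint carrier_matD(1,2))
  have "mat_adjoint (ptrace_L dV dL X) $$ (i,i') = ptrace_L dV dL X $$ (i,i')" if "i < dV" "i' < dV" for i i'
    using that by (simp add: index_ptrace_L cnj_sum Xij index_pair_less)
  then have "mat_adjoint (ptrace_L dV dL X) = ptrace_L dV dL X" by (intro eq_matI) auto
  then show ?thesis by (simp add: hermitian_mat_def)
qed

text \<open>The j-th slice of v is v tensored with the j-th basis vector of the second factor.\<close>

definition slice_vec :: "nat \<Rightarrow> nat \<Rightarrow> complex vec \<Rightarrow> nat \<Rightarrow> complex vec" where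
  "slice_vec dV dL v j = vec (dV * dL) (\<lambda>p. if p mod dL = j then v $ (p div dL) else 0)"

lemma slice_vec_carrier [simp]: "slice_vec dV dL v j \<in> carrier_vec (dV * dL)"
  by (simp add: slice_vec_def)

lemma quad_form_sum:
  "(v::complex vec) \<in> carrier_vec n \<Longrightarrow> (M::complex mat) \<in> carrier_mat n n \<Longrightarrow>
   conjugate v \<bullet> (M *\<^sub>v v) = (\<Sum>p<n. \<Sum>q<n. cnj (v $ p) * M $$ (p,q) * v $ q)"
  by (auto simp: scalar_prod_def atLeast0LessThan sum_distrib_left mult_ac intro!: sum.cong)

lemma quad_form_ptrace_L:
  assumes X: "X \<in> carrier_mat (dV * dL) (dV * dL)" and v: "v \<in> carrier_vec dV"
  shows "conjugate v \<bullet> (ptrace_L dV dL X *\<^sub>v v)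
       = (\<Sum>j<dL. conjugate (slice_vec dV dL v j) \<bullet> (X *\<^sub>v slice_vec dV dL v j))"
proof -
  have "conjugate v \<bullet> (ptrace_L dV dL X *\<^sub>v v)
      = (\<Sum>i<dV. \<Sum>i'<dV. cnj (v $ i) * (\<Sum>j<dL. X $$ (i*dL+j, i'*dL+j)) * v $ i')"
    using v by (simp add: quad_form_sum[of _ dV] index_ptrace_L)
  also have "\<dots> = (\<Sum>j<dL. \<Sum>i<dV. \<Sum>i'<dV. cnj (v $ i) * X $$ (i*dL+j, i'*dL+j) * v $ i')"
    by (simp add: sum_distrib_left sum_distrib_right sum.swap[of _ "{..<dL}"])
  also have "\<dots> = (\<Sum>j<dL. conjugate (slice_vec dV dL v j) \<bullet> (X *\<^sub>v slice_vec dV dL v j))"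
  proof (rule sum.cong[OF refl])
    fix j assume j: "j \<in> {..<dL}"
    let ?f = "\<lambda>i i'. cnj (v $ i) * X $$ (i*dL+j, i'*dL+j) * v $ i'"
    have "conjugate (slice_vec dV dL v j) \<bullet> (X *\<^sub>v slice_vec dV dL v j)
       = (\<Sum>i<dV. \<Sum>j1<dL. \<Sum>i'<dV. \<Sum>j2<dL. if j1 = j then (if j2 = j then ?f i i' else 0) else 0)"
      using X by (simp add: quad_form_sum[of _ "dV*dL"] sum_lessThan_mult_split)
        (intro sum.cong refl, auto simp: slice_vec_def index_pair_less)
    also have "\<dots> = (\<Sum>i<dV. \<Sum>j1<dL. if j1 = j then (\<Sum>i'<dV. ?f i i') else 0)"
      by (intro sum.cong refl) (use j in \<open>auto simp: sum.delta\<close>)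
    also have "\<dots> = (\<Sum>i<dV. \<Sum>i'<dV. ?f i i')" using j by (simp add: sum.delta)
    finally show "(\<Sum>i<dV. \<Sum>i'<dV. ?f i i') = conjugate (slice_vec dV dL v j) \<bullet> (X *\<^sub>v slice_vec dV dL v j)"
      by simp
  qed
  finally show ?thesis .
qed

lemma ptrace_L_psd:
  assumes X: "psd_mat (dV * dL) X"
  shows "psd_mat dV (ptrace_L dV dL X)"
  unfolding psd_mat_def
proof (intro conjI ballI)
  show "hermitian_mat dV (ptrace_L dV dL X)" using X ptrace_L_hermitian by (simp add: psd_mat_def)
  fix v :: "complex vec" assume v: "v \<in> carrier_vec dV"
  have Xc: "X \<in> carrier_mat (dV * dL) (dV * dL)" using X by (simp add: psd_mat_def hermitian_mat_def)
  show "0 \<le> Re (conjugate v \<bullet> (ptrace_L dV dL X *\<^sub>v v))"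
    unfolding quad_form_ptrace_L[OF Xc v] Re_sum using X by (intro sum_nonneg) (simp add: psd_mat_def)
qed

lemma ptrace_L_pd:
  assumes X: "pd_mat (dV * dL) X" and dL: "0 < dL"
  shows "pd_mat dV (ptrace_L dV dL X)"
  unfolding pd_mat_def
proof (intro conjI ballI impI)
  show "hermitian_mat dV (ptrace_L dV dL X)" using X ptrace_L_hermitian by (simp add: pd_mat_def)
  fix v :: "complex vec" assume v: "v \<in> carrier_vec dV" and v0: "v \<noteq> 0\<^sub>v dV"
  have Xc: "X \<in> carrier_mat (dV * dL) (dV * dL)" using X by (simp add: pd_mat_def hermitian_mat_def)
  let ?q = "\<lambda>j. Re (conjugate (slice_vec dV dL v j) \<bullet> (X *\<^sub>v slice_vec dV dL v j))"
  have nonneg: "0 \<le> ?q j" for j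
    using pd_mat_imp_psd_mat[OF X] by (simp add: psd_mat_def)
  obtain i where i: "i < dV" "v $ i \<noteq> 0" using v v0 by (metis eq_vecI carrier_vecD index_zero_vec(1,2))
  have "slice_vec dV dL v 0 $ (i * dL) = v $ i" using i dL index_pair_less[of i dV 0 dL] by (simp add: slice_vec_def)
  then have "slice_vec dV dL v 0 \<noteq> 0\<^sub>v (dV * dL)" using i index_pair_less[of i dV 0 dL] dL by auto
  then have "0 < ?q 0" using X by (simp add: pd_mat_def)
  also have "?q 0 \<le> (\<Sum>j<dL. ?q j)" by (rule member_le_sum) (use dL nonneg in auto)
  finally show "0 < Re (conjugate v \<bullet> (ptrace_L dV dL X *\<^sub>v v))"
    unfolding quad_form_ptrace_L[OF Xc v] Re_sum .
qed

lemma spectral_sum_ptrace_L: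
  assumes U: "unitary_mat (dV * dL) U" "X = U * real_diag_mat (dV * dL) a * mat_adjoint U"
    and U': "unitary_mat dV U'" "ptrace_L dV dL X = U' * real_diag_mat dV a' * mat_adjoint U'"
  shows "(\<Sum>i<dV. a' i) = (\<Sum>i<dV * dL. a i)"
proof -
  have X: "X \<in> carrier_mat (dV * dL) (dV * dL)" using unitary_matD(1)[OF U(1)] U(2) by simp
  have "complex_of_real (\<Sum>i<dV. a' i) = mat_trace (ptrace_L dV dL X)"
    using mat_trace_spectral[OF U'(1), of a'] U'(2) by simp
  also have "\<dots> = complex_of_real (\<Sum>i<dV * dL. a i)"
    using mat_trace_ptrace_L[OF X] mat_trace_spectral[OF U(1), of a] U(2) by simp
  finally show ?thesis by (simp only: of_real_eq_iff)
qed

lemma quad_objective_tensor_id_mat: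
  assumes X: "X \<in> carrier_mat (dV * dL) (dV * dL)" and Y: "Y \<in> carrier_mat (dV * dL) (dV * dL)"
    and Z: "Z \<in> carrier_mat dV dV"
  shows "quad_objective u X Y (tensor_id_mat dV dL Z) = quad_objective u (ptrace_L dV dL X) (ptrace_L dV dL Y) Z"
proof -
  let ?n = "dV * dL"
  let ?E = "tensor_id_mat dV dL Z"
  have E: "?E \<in> carrier_mat ?n ?n" by simp
  have EEH: "?E * mat_adjoint ?E = tensor_id_mat dV dL (Z * mat_adjoint Z)"
    unfolding mat_adjoint_tensor_id_mat[OF Z] by (rule tensor_id_mat_mult) (use Z in auto)
  have EHE: "mat_adjoint ?E * ?E = tensor_id_mat dV dL (mat_adjoint Z * Z)"
    unfolding mat_adjoint_tensor_id_mat[OF Z] by (rule tensor_id_mat_mult) (use Z in auto)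
  have "mat_trace (mat_adjoint ?E * X * ?E) = mat_trace (?E * (mat_adjoint ?E * X))"
    by (rule mat_trace_mult_comm[of _ ?n ?n]) (use X E in auto)
  also have "\<dots> = mat_trace ((?E * mat_adjoint ?E) * X)"
    using X E by (simp add: assoc_mult_mat[of _ ?n ?n _ ?n _ ?n])
  also have "\<dots> = mat_trace (X * (?E * mat_adjoint ?E))"
    by (rule mat_trace_mult_comm[of _ ?n ?n]) (use X E in auto)
  also have "\<dots> = mat_trace (ptrace_L dV dL X * (Z * mat_adjoint Z))"
    unfolding EEH by (rule mat_trace_mult_tensor_id_mat[OF X]) (use Z in simp)
  also have "\<dots> = mat_trace (mat_adjoint Z * (ptrace_L dV dL X * Z))"
    using Z mat_trace_mult_comm[of "ptrace_L dV dL X * Z" dV dV "mat_adjoint Z"]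
    by (simp add: assoc_mult_mat[of _ dV dV _ dV _ dV])
  also have "\<dots> = mat_trace (mat_adjoint Z * ptrace_L dV dL X * Z)"
    using Z by (simp add: assoc_mult_mat[of _ dV dV _ dV _ dV])
  finally have t2: "mat_trace (mat_adjoint ?E * X * ?E) = mat_trace (mat_adjoint Z * ptrace_L dV dL X * Z)" .
  have "mat_trace (mat_adjoint ?E * ?E * Y) = mat_trace (Y * (mat_adjoint ?E * ?E))"
    by (rule mat_trace_mult_comm[of _ ?n ?n]) (use Y E in auto)
  also have "\<dots> = mat_trace (ptrace_L dV dL Y * (mat_adjoint Z * Z))"
    unfolding EHE by (rule mat_trace_mult_tensor_id_mat[OF Y]) (use Z in simp)
  also have "\<dots> = mat_trace (mat_adjoint Z * Z * ptrace_L dV dL Y)"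
    by (rule mat_trace_mult_comm[of _ dV dV]) (use Z in auto)
  finally have t3: "mat_trace (mat_adjoint ?E * ?E * Y) = mat_trace (mat_adjoint Z * Z * ptrace_L dV dL Y)" .
  show ?thesis unfolding quad_objective_def mat_trace_mult_tensor_id_mat[OF Y Z] t2 t3 ..
qed

lemma quad_objective_max_ptrace_L_mono:
  assumes U: "unitary_mat (dV * dL) U" and W: "unitary_mat (dV * dL) W"
    and X: "X = U * real_diag_mat (dV * dL) a * mat_adjoint U"
    and Y: "Y = W * real_diag_mat (dV * dL) b * mat_adjoint W"
    and a: "\<And>i. i < dV * dL \<Longrightarrow> 0 \<le> a i" and b: "\<And>j. j < dV * dL \<Longrightarrow> 0 < b j"
    and U': "unitary_mat dV U'" and W': "unitary_mat dV W'"
    and X': "ptrace_L dV dL X = U' * real_diag_mat dV a' * mat_adjoint U'"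
    and Y': "ptrace_L dV dL Y = W' * real_diag_mat dV b' * mat_adjoint W'"
    and a': "\<And>i. i < dV \<Longrightarrow> 0 \<le> a' i" and b': "\<And>j. j < dV \<Longrightarrow> 0 < b' j"
    and u: "0 < u" "u < 1"
  shows "quad_objective_max dV u U' W' a' b' \<le> quad_objective_max (dV * dL) u U W a b"
proof -
  have Xc: "X \<in> carrier_mat (dV * dL) (dV * dL)" and Yc: "Y \<in> carrier_mat (dV * dL) (dV * dL)"
    using unitary_matD(1)[OF U] unitary_matD(1)[OF W] by (simp_all add: X Y)
  have "\<exists>Z \<in> carrier_mat dV dV. quad_objective u (ptrace_L dV dL X) (ptrace_L dV dL Y) Z
      = quad_objective_max dV u U' W' a' b'"
    unfolding X' Y' by (rule quad_objective_max_attained[OF U' W' a' b' u])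
  then obtain Z where Z: "Z \<in> carrier_mat dV dV"
    and "quad_objective u (ptrace_L dV dL X) (ptrace_L dV dL Y) Z = quad_objective_max dV u U' W' a' b'"
    by blast
  then have "quad_objective_max dV u U' W' a' b' = quad_objective u X Y (tensor_id_mat dV dL Z)"
    using quad_objective_tensor_id_mat[OF Xc Yc Z] by simp
  also have "\<dots> \<le> quad_objective_max (dV * dL) u U W a b"
    unfolding X Y using quad_objective_le_max[OF U W a b u, where Z = "tensor_id_mat dV dL Z"] by simp
  finally show ?thesis .
qed

section \<open>Monotonicity of relative entropy under the partial trace\<close>

text \<open>In spectral coordinates the value at u = 0 is the entropy -\<Sum> a ln a and the value at
  u = 1 is the cross entropy -\<Sum> c a ln b, so the relative entropy is the total change of this
  function over [0, 1].\<close>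

definition cross_entropy_interp ::
  "nat \<Rightarrow> complex mat \<Rightarrow> complex mat \<Rightarrow> (nat \<Rightarrow> real) \<Rightarrow> (nat \<Rightarrow> real) \<Rightarrow> real \<Rightarrow> real" where
  "cross_entropy_interp n U W a b u =
     (\<Sum>i<n. \<Sum>j<n. transition_weight U W i j * (- a i * ln ((1 - u) * a i + u * b j)))"

lemma has_real_derivative_neg_mult_ln_interp:
  assumes a: "0 \<le> (a::real)" and b: "0 < b" and u: "0 \<le> u" "u \<le> 1"
  shows "((\<lambda>u. - a * ln ((1 - u) * a + u * b)) has_real_derivative (a * (a - b) / ((1 - u) * a + u * b))) (at u)"
proof (cases "a = 0")
  case False
  have "0 < (1 - u) * a + u * b"
    using a b u False by (cases "u = 0") (auto intro: add_nonneg_pos)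
  then have "((\<lambda>u. - a * ln ((1 - u) * a + u * b)) has_real_derivative (- a * ((b - a) / ((1 - u) * a + u * b)))) (at u)"
    by (auto intro!: derivative_eq_intros)
  then show ?thesis by (simp add: field_simps)
qed simp

lemma cross_entropy_interp_has_derivative:
  assumes a: "\<And>i. i < n \<Longrightarrow> 0 \<le> a i" and b: "\<And>j. j < n \<Longrightarrow> 0 < b j" and u: "0 \<le> u" "u \<le> 1"
  shows "(cross_entropy_interp n U W a b has_real_derivative
      (\<Sum>i<n. \<Sum>j<n. transition_weight U W i j * (a i * (a i - b j) / ((1 - u) * a i + u * b j)))) (at u)"
  unfolding cross_entropy_interp_def
  by (intro DERIV_sum DERIV_cmult has_real_derivative_neg_mult_ln_interp) (use a b u in auto)

lemma cross_entropy_interp_continuous_on: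
  assumes "\<And>i. i < n \<Longrightarrow> 0 \<le> a i" "\<And>j. j < n \<Longrightarrow> 0 < b j"
  shows "continuous_on {0..1} (cross_entropy_interp n U W a b)"
  by (rule DERIV_continuous_on, rule has_field_derivative_at_within, rule cross_entropy_interp_has_derivative)
    (use assms in auto)

lemma interp_derivative_identity:
  assumes "0 < (u::real)" "u < 1" "0 < (1 - u) * a + u * b"
  shows "a * (a - b) / ((1 - u) * a + u * b)
       = a / (1 - u) - b / (1 - u)\<^sup>2 + u / (1 - u)\<^sup>2 * (b\<^sup>2 / ((1 - u) * a + u * b))"
proof -
  define c where "c = 1 - u"
  define k where "k = (1 - u) * a + u * b"
  have c: "c \<noteq> 0" and k: "k \<noteq> 0" using assms by (auto simp: c_def k_def)
  have "a / c - b / c\<^sup>2 + u / c\<^sup>2 * (b\<^sup>2 / k) = (a * c * k - b * k + u * b\<^sup>2) / (c\<^sup>2 * k)"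
    using c k by (simp add: field_simps power2_eq_square)
  also have "a * c * k - b * k + u * b\<^sup>2 = a * (a - b) * c\<^sup>2"
    unfolding c_def k_def by (simp add: algebra_simps power2_eq_square)
  also have "a * (a - b) * c\<^sup>2 / (c\<^sup>2 * k) = a * (a - b) / k"
    using c k by (simp add: power2_eq_square)
  finally show ?thesis unfolding c_def k_def by simp
qed

text \<open>Because the transition weights are doubly stochastic, the derivative depends on the pair
  (A, B) only through tr A, tr B and the maximum of the quadratic objective.\<close>

lemma cross_entropy_interp_derivative_eq:
  assumes U: "unitary_mat n U" and W: "unitary_mat n W"
    and a: "\<And>i. i < n \<Longrightarrow> 0 \<le> a i" and b: "\<And>j. j < n \<Longrightarrow> 0 < b j" and u: "0 < u" "u < 1"
  shows "(\<Sum>i<n. \<Sum>j<n. transition_weight U W i j * (a i * (a i - b j) / ((1 - u) * a i + u * b j)))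
       = (\<Sum>i<n. a i) / (1 - u) - (\<Sum>j<n. b j) / (1 - u)\<^sup>2 + u / (1 - u)\<^sup>2 * quad_objective_max n u U W a b"
proof -
  let ?c = "transition_weight U W"
  have "(\<Sum>i<n. \<Sum>j<n. ?c i j * (a i * (a i - b j) / ((1 - u) * a i + u * b j)))
      = (\<Sum>i<n. \<Sum>j<n. ?c i j * a i / (1 - u) - ?c i j * b j / (1 - u)\<^sup>2
          + u / (1 - u)\<^sup>2 * (?c i j * (b j)\<^sup>2 / ((1 - u) * a i + u * b j)))"
  proof (intro sum.cong refl)
    fix i j assume "i \<in> {..<n}" "j \<in> {..<n}"
    then have k: "0 < (1 - u) * a i + u * b j" using a b u by (simp add: add_nonneg_pos)
    show "?c i j * (a i * (a i - b j) / ((1 - u) * a i + u * b j))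
        = ?c i j * a i / (1 - u) - ?c i j * b j / (1 - u)\<^sup>2
          + u / (1 - u)\<^sup>2 * (?c i j * (b j)\<^sup>2 / ((1 - u) * a i + u * b j))"
      unfolding interp_derivative_identity[OF u k] by (simp add: ring_distribs mult_ac)
  qed
  also have "\<dots> = (\<Sum>i<n. \<Sum>j<n. ?c i j * a i / (1 - u)) - (\<Sum>i<n. \<Sum>j<n. ?c i j * b j / (1 - u)\<^sup>2)
      + u / (1 - u)\<^sup>2 * quad_objective_max n u U W a b"
    by (simp add: quad_objective_max_def sum.distrib sum_subtractf sum_distrib_left)
  also have "(\<Sum>i<n. \<Sum>j<n. ?c i j * a i / (1 - u)) = (\<Sum>i<n. a i * (\<Sum>j<n. ?c i j) / (1 - u))"
    by (simp add: sum_distrib_left sum_divide_distrib mult_ac)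
  also have "\<dots> = (\<Sum>i<n. a i) / (1 - u)"
    using transition_weight_sums(1)[OF U W] by (simp add: sum_divide_distrib)
  also have "(\<Sum>i<n. \<Sum>j<n. ?c i j * b j / (1 - u)\<^sup>2) = (\<Sum>j<n. \<Sum>i<n. ?c i j * b j / (1 - u)\<^sup>2)"
    by (rule sum.swap)
  also have "\<dots> = (\<Sum>j<n. b j * (\<Sum>i<n. ?c i j) / (1 - u)\<^sup>2)"
    by (simp add: sum_distrib_left sum_divide_distrib mult_ac)
  also have "\<dots> = (\<Sum>j<n. b j) / (1 - u)\<^sup>2"
    using transition_weight_sums(2)[OF U W] by (simp add: sum_divide_distrib)
  finally show ?thesis .
qed

lemma cross_entropy_interp_deriv:
  assumes U: "unitary_mat n U" and W: "unitary_mat n W"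
    and a: "\<And>i. i < n \<Longrightarrow> 0 \<le> a i" and b: "\<And>j. j < n \<Longrightarrow> 0 < b j" and u: "0 < u" "u < 1"
  shows "(cross_entropy_interp n U W a b has_real_derivative
      (\<Sum>i<n. a i) / (1 - u) - (\<Sum>j<n. b j) / (1 - u)\<^sup>2 + u / (1 - u)\<^sup>2 * quad_objective_max n u U W a b) (at u)"
proof -
  have "(cross_entropy_interp n U W a b has_real_derivative
      (\<Sum>i<n. \<Sum>j<n. transition_weight U W i j * (a i * (a i - b j) / ((1 - u) * a i + u * b j)))) (at u)"
    by (rule cross_entropy_interp_has_derivative) (use a b u in auto)
  moreover have "(\<Sum>i<n. \<Sum>j<n. transition_weight U W i j * (a i * (a i - b j) / ((1 - u) * a i + u * b j)))
      = (\<Sum>i<n. a i) / (1 - u) - (\<Sum>j<n. b j) / (1 - u)\<^sup>2 + u / (1 - u)\<^sup>2 * quad_objective_max n u U W a b"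
    by (rule cross_entropy_interp_derivative_eq) (use U W a b u in auto)
  ultimately show ?thesis by simp
qed

definition rel_entropy :: "complex mat \<Rightarrow> complex mat \<Rightarrow> real" where
  "rel_entropy A B = Re (mat_trace (A * mat_log A)) - Re (mat_trace (A * mat_log B))"

lemma rel_entropy_spectral:
  assumes U: "unitary_mat n U" and W: "unitary_mat n W"
    and A: "A = U * real_diag_mat n a * mat_adjoint U" "mat_log A = U * real_diag_mat n (ln \<circ> a) * mat_adjoint U"
    and B: "mat_log B = W * real_diag_mat n (ln \<circ> b) * mat_adjoint W"
  shows "rel_entropy A B = cross_entropy_interp n U W a b 1 - cross_entropy_interp n U W a b 0"
proof -
  have "Re (mat_trace (A * mat_log A)) = (\<Sum>i<n. \<Sum>j<n. transition_weight U U i j * a i * ln (a j))"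
    unfolding A(2) unfolding A(1) mat_trace_spectral_mult[OF U U] by simp
  also have "\<dots> = (\<Sum>i<n. a i * ln (a i))"
    using transition_weight_self[OF U] by (simp add: if_distrib[of "\<lambda>c. c * _"] cong: if_cong)
  also have "\<dots> = (\<Sum>i<n. \<Sum>j<n. transition_weight U W i j * (a i * ln (a i)))"
    by (intro sum.cong refl) (simp add: sum_distrib_right[symmetric] transition_weight_sums(1)[OF U W])
  also have "\<dots> = - cross_entropy_interp n U W a b 0"
    by (simp add: cross_entropy_interp_def sum_negf[symmetric])
  finally have "Re (mat_trace (A * mat_log A)) = - cross_entropy_interp n U W a b 0" .
  moreover have "Re (mat_trace (A * mat_log B)) = - cross_entropy_interp n U W a b 1"
    unfolding A(1) B mat_trace_spectral_mult[OF U W] cross_entropy_interp_def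
    by (simp add: sum_negf[symmetric] mult_ac)
  ultimately show ?thesis by (simp add: rel_entropy_def)
qed

lemma cross_entropy_interp_gap_mono:
  assumes U: "unitary_mat n U" and W: "unitary_mat n W"
    and a: "\<And>i. i < n \<Longrightarrow> 0 \<le> a i" and b: "\<And>j. j < n \<Longrightarrow> 0 < b j"
    and U': "unitary_mat m U'" and W': "unitary_mat m W'"
    and a': "\<And>i. i < m \<Longrightarrow> 0 \<le> a' i" and b': "\<And>j. j < m \<Longrightarrow> 0 < b' j"
    and tr_a: "(\<Sum>i<m. a' i) = (\<Sum>i<n. a i)" and tr_b: "(\<Sum>j<m. b' j) = (\<Sum>j<n. b j)"
    and max_mono: "\<And>u. 0 < u \<Longrightarrow> u < 1 \<Longrightarrow> quad_objective_max m u U' W' a' b' \<le> quad_objective_max n u U W a b"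
  shows "cross_entropy_interp m U' W' a' b' 1 - cross_entropy_interp m U' W' a' b' 0
       \<le> cross_entropy_interp n U W a b 1 - cross_entropy_interp n U W a b 0"
proof -
  define f where "f = (\<lambda>u. cross_entropy_interp n U W a b u - cross_entropy_interp m U' W' a' b' u)"
  have "f 0 \<le> f 1"
  proof (rule DERIV_nonneg_imp_increasing_open[of 0 1 f])
    fix u :: real assume u: "0 < u" "u < 1"
    let ?D = "\<lambda>n U W a b. (\<Sum>i<n. a i) / (1 - u) - (\<Sum>j<n. b j) / (1 - u)\<^sup>2
      + u / (1 - u)\<^sup>2 * quad_objective_max n u U W a b"
    have "(cross_entropy_interp n U W a b has_real_derivative ?D n U W a b) (at u)"
      by (rule cross_entropy_interp_deriv[OF U W a b u])
    moreover have "(cross_entropy_interp m U' W' a' b' has_real_derivative ?D m U' W' a' b') (at u)"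
      by (rule cross_entropy_interp_deriv[OF U' W' a' b' u])
    ultimately have "(f has_real_derivative ?D n U W a b - ?D m U' W' a' b') (at u)"
      unfolding f_def by (rule DERIV_diff)
    moreover have "u / (1 - u)\<^sup>2 * quad_objective_max m u U' W' a' b' \<le> u / (1 - u)\<^sup>2 * quad_objective_max n u U W a b"
      using max_mono[OF u] u by (intro mult_left_mono) auto
    then have "0 \<le> ?D n U W a b - ?D m U' W' a' b'" unfolding tr_a tr_b by linarith
    ultimately show "\<exists>y. (f has_real_derivative y) (at u) \<and> 0 \<le> y" by blast
  next
    show "continuous_on {0..1} f"
      unfolding f_def using a b a' b' by (intro continuous_on_diff cross_entropy_interp_continuous_on) auto
  qed simp
  then show ?thesis by (simp add: f_def)
qed

theorem rel_entropy_ptrace_L_mono: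
  assumes eta: "psd_mat (dV * dL) eta" and rho: "pd_mat (dV * dL) rho" and dL: "0 < dL"
  shows "rel_entropy (ptrace_L dV dL eta) (ptrace_L dV dL rho) \<le> rel_entropy eta rho"
proof -
  have etaV: "psd_mat dV (ptrace_L dV dL eta)" and rhoV: "pd_mat dV (ptrace_L dV dL rho)"
    using ptrace_L_psd[OF eta] ptrace_L_pd[OF rho dL] .
  obtain U a where U: "unitary_mat (dV * dL) U" "eta = U * real_diag_mat (dV * dL) a * mat_adjoint U"
      "mat_log eta = U * real_diag_mat (dV * dL) (ln \<circ> a) * mat_adjoint U"
    using eta by (auto simp: psd_mat_def elim: mat_log_spectral)
  obtain W b where W: "unitary_mat (dV * dL) W" "rho = W * real_diag_mat (dV * dL) b * mat_adjoint W"
      "mat_log rho = W * real_diag_mat (dV * dL) (ln \<circ> b) * mat_adjoint W"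
    using rho by (auto simp: pd_mat_def elim: mat_log_spectral)
  obtain U' a' where U': "unitary_mat dV U'" "ptrace_L dV dL eta = U' * real_diag_mat dV a' * mat_adjoint U'"
      "mat_log (ptrace_L dV dL eta) = U' * real_diag_mat dV (ln \<circ> a') * mat_adjoint U'"
    using etaV by (auto simp: psd_mat_def elim: mat_log_spectral)
  obtain W' b' where W': "unitary_mat dV W'" "ptrace_L dV dL rho = W' * real_diag_mat dV b' * mat_adjoint W'"
      "mat_log (ptrace_L dV dL rho) = W' * real_diag_mat dV (ln \<circ> b') * mat_adjoint W'"
    using rhoV by (auto simp: pd_mat_def elim: mat_log_spectral)
  have "quad_objective_max dV u U' W' a' b' \<le> quad_objective_max (dV * dL) u U W a b" if "0 < u" "u < 1" for u
    by (rule quad_objective_max_ptrace_L_mono[OF U(1) W(1) U(2) W(2) _ _ U'(1) W'(1) U'(2) W'(2)])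
      (use psd_mat_eigenvalue_nonneg[OF eta U(1,2)] pd_mat_eigenvalue_pos[OF rho W(1,2)]
        psd_mat_eigenvalue_nonneg[OF etaV U'(1,2)] pd_mat_eigenvalue_pos[OF rhoV W'(1,2)] that in auto)
  from cross_entropy_interp_gap_mono[OF U(1) W(1) _ _ U'(1) W'(1) _ _
      spectral_sum_ptrace_L[OF U(1,2) U'(1,2)] spectral_sum_ptrace_L[OF W(1,2) W'(1,2)] this]
  show ?thesis
    using psd_mat_eigenvalue_nonneg[OF eta U(1,2)] pd_mat_eigenvalue_pos[OF rho W(1,2)]
      psd_mat_eigenvalue_nonneg[OF etaV U'(1,2)] pd_mat_eigenvalue_pos[OF rhoV W'(1,2)]
    by (simp add: rel_entropy_spectral[OF U(1) W(1) U(2,3) W(3)] rel_entropy_spectral[OF U'(1) W'(1) U'(2,3) W'(3)])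
qed

theorem mainTheorem1:
  fixes dV dL :: nat and etaV :: "complex mat" and rho :: "'t \<Rightarrow> complex mat"
    and theta :: 't and eta :: "complex mat"
  assumes "density_mat dV etaV"
    and "\<And>th. density_mat (dV * dL) (rho th)"
    and "\<And>th. pd_mat (dV * dL) (rho th)"
    and "eta \<in> joint_set dV dL etaV"
  shows "log_likelihood dV dL etaV (rho theta) \<ge> QELBO etaV eta (rho theta)"
proof -
  have eta: "psd_mat (dV * dL) eta" and etaV: "ptrace_L dV dL eta = etaV"
    using assms(4) by (auto simp: joint_set_def density_mat_def)
  have "0 < dL"
  proof (rule ccontr)
    assume "\<not> 0 < dL"
    then have "rho theta \<in> carrier_mat 0 0"
      using assms(3)[of theta] unfolding pd_mat_def hermitian_mat_def by simp
    then show False using assms(2)[of theta] by (simp add: density_mat_def mat_trace_def)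
  qed
  then have "rel_entropy etaV (ptrace_L dV dL (rho theta)) \<le> rel_entropy eta (rho theta)"
    using rel_entropy_ptrace_L_mono[OF eta assms(3)] etaV by simp
  then show ?thesis by (simp add: log_likelihood_def QELBO_def vn_entropy_def rel_entropy_def)
qed

end
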